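(* Let $\Lambda^*$ be a factorial language in $(\mathbb F_+^d)^N$ and let $\emptyset\ne F\subseteq[N]$. Then \[\bigcap_{i\in F}\ker\phi_{\mathbf i}=\{a\in A: a=aQ_F\}\quad\text{and}\quad\{a\in A:aQ_F=0\}\subseteq\mathcal I_F.\] Hence $Q_F\in A$ if and only if $\mathcal I_F=A(I-Q_F)$.
   Context: $\mathbb F_+^d$ is the free semigroup on letters $[d]$ with empty word $\emptyset$. In $(\mathbb F_+^d)^N$: $\underline\mu*\underline\nu=(\mu_1\nu_1,\dots,\mu_N\nu_N)$; $|\underline\mu|=(|\mu_1|,\dots,|\mu_N|)$; $\operatorname{supp}\underline\mu=\{i:\mu_i\ne\emptyset\}$; $\delta_i(k)$ has the letter $k$ in coordinate $i$ and $\emptyset$ elsewhere. A factorial language $\Lambda^*\subseteq(\mathbb F_+^d)^N$: for every $i\in[N]$ some $\delta_i(k)\in\Lambda^*$, and $\Lambda^*$ is closed under subwords ($\underline\nu$ with $\underline\mu=\underline w*\underline\nu*\underline q$). On $\ell^2(\Lambda^* )$ with basis $\{e_{\underline w}\}$, $T_{\underline\mu}e_{\underline w}=e_{\underline\mu*\underline w}$ if $\underline\mu*\underline w\in\Lambda^*$ and $0$ otherwise. $A=C^*(T_{\underline\mu}^*T_{\underline\mu}:\underline\mu\in\Lambda^* )$ (unital, the algebra of checkers). For $i\in[N]$, $P_{\mathbf i}=\sum_{k\in[d]}T_{\delta_i(k)}T_{\delta_i(k)}^*$ and $Q_F=\prod_{i\in F}(I-P_{\mathbf i})$. Product system $X(\Lambda^*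 )$ over $\mathbb Z_+^N$ with coefficients $A$: $X_{\underline n}(\Lambda^* )=\overline{\operatorname{span}}\{T_{\underline\mu}a:a\in A,\underline\mu\in\Lambda^*,|\underline\mu|=\underline n\}\subseteq B(\ell^2(\Lambda^* ))$, with $\langle\xi,\eta\rangle=\xi^*\eta$, $\phi_{\underline n}(a)\xi\cdot b=a\xi b$, and multiplication given by operator product; all left actions are by compact operators. $\ker\phi_{\mathbf i}=\{a\in A:a\xi=0\ \forall\xi\in X_{\mathbf i}(\Lambda^* )\}$. $\mathcal J_F=(\bigcap_{i\in F}\ker\phi_{\mathbf i})^\perp$ (annihilator in $A$) and $\mathcal I_F=\{a\in\mathcal J_F:\langle\xi,a\eta\rangle\in\mathcal J_F\ \forall\xi,\eta\in X_{\underline m}(\Lambda^* ),\ \underline m\in\mathbb Z_+^N \text{ with } \{i:m_i\neq0\}\cap F=\emptyset\}$. *)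

theory Defs
  imports "HOL-Analysis.Analysis" "HOL-Library.Function_Algebras"
begin

text \<open>Elements of (F_+^d)^N are functions nat => nat list, nonempty only on {1..N};
letters are 1..d.  Vectors of l2(Lambda*) are functions word => complex vanishing
off Lambda*.  Bounded operators are maps vec => vec that are linear and bounded on
l2(Lambda*), and send non-l2 inputs to 0 (a canonical normalisation).
The product of operators is composition, sums/differences are pointwise.\<close>

type_synonym word = "nat \<Rightarrow> nat list"
type_synonym vec = "word \<Rightarrow> complex"
type_synonym op = "vec \<Rightarrow> vec"

definition tcat :: "word \<Rightarrow> word \<Rightarrow> word" where
  "tcat \<mu> \<nu> = (\<lambda>i. \<mu> i @ \<nu> i)"

definition tlen :: "word \<Rightarrow> nat \<Rightarrow> nat" where
  "tlen \<mu> = (\<lambda>i. length (\<mu> i))"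

definition delta :: "nat \<Rightarrow> nat \<Rightarrow> word" where
  "delta i k = (\<lambda>j. if j = i then [k] else [])"

definition unitvec :: "nat \<Rightarrow> nat \<Rightarrow> nat" where
  "unitvec i = (\<lambda>j. if j = i then 1 else 0)"

definition words :: "nat \<Rightarrow> nat \<Rightarrow> word set" where
  "words d N = {w. (\<forall>i. i \<notin> {1..N} \<longrightarrow> w i = []) \<and> (\<forall>i. set (w i) \<subseteq> {1..d})}"

definition factorial_language :: "nat \<Rightarrow> nat \<Rightarrow> word set \<Rightarrow> bool" where
  "factorial_language d N L \<longleftrightarrow>
     L \<subseteq> words d N \<and>
     (\<forall>i\<in>{1..N}. \<exists>k\<in>{1..d}. delta i k \<in> L) \<and>
     (\<forall>\<mu>\<in>L. \<forall>w \<nu> q. \<mu> = tcat (tcat w \<nu>) q \<longrightarrow> \<nu> \<in> L)"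

definition ell2 :: "word set \<Rightarrow> vec set" where
  "ell2 L = {f. (\<forall>x. x \<notin> L \<longrightarrow> f x = 0) \<and> (\<lambda>x. (cmod (f x))^2) summable_on UNIV}"

definition l2norm :: "vec \<Rightarrow> real" where
  "l2norm f = sqrt (\<Sum>\<^sub>\<infinity>x. (cmod (f x))^2)"

definition l2inner :: "vec \<Rightarrow> vec \<Rightarrow> complex" where
  "l2inner f g = (\<Sum>\<^sub>\<infinity>x. cnj (f x) * g x)"

definition bounded_ops :: "word set \<Rightarrow> op set" where
  "bounded_ops L = {T.
     (\<forall>f\<in>ell2 L. T f \<in> ell2 L) \<and>
     (\<forall>f\<in>ell2 L. \<forall>g\<in>ell2 L. T (f + g) = T f + T g) \<and>
     (\<forall>c. \<forall>f\<in>ell2 L. T (\<lambda>x. c * f x) = (\<lambda>x. c * T f x)) \<and>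
     (\<exists>C. \<forall>f\<in>ell2 L. l2norm (T f) \<le> C * l2norm f) \<and>
     (\<forall>f. f \<notin> ell2 L \<longrightarrow> T f = 0)}"

definition idop :: "word set \<Rightarrow> op" where
  "idop L = (\<lambda>f. if f \<in> ell2 L then f else 0)"

definition opnorm :: "word set \<Rightarrow> op \<Rightarrow> real" where
  "opnorm L T = Sup {l2norm (T f) | f. f \<in> ell2 L \<and> l2norm f \<le> 1}"

definition adjoint :: "word set \<Rightarrow> op \<Rightarrow> op" where
  "adjoint L T = (THE S. S \<in> bounded_ops L \<and>
     (\<forall>f\<in>ell2 L. \<forall>g\<in>ell2 L. l2inner (S f) g = l2inner f (T g)))"

definition opscale :: "complex \<Rightarrow> op \<Rightarrow> op" where
  "opscale c T = (\<lambda>f x. c * T f x)"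

definition norm_closed :: "word set \<Rightarrow> op set \<Rightarrow> bool" where
  "norm_closed L S \<longleftrightarrow> (\<forall>s T. (\<forall>n. s n \<in> S) \<and> T \<in> bounded_ops L \<and>
       (\<lambda>n. opnorm L (s n - T)) \<longlonglongrightarrow> 0 \<longrightarrow> T \<in> S)"

definition unital_cstar_gen :: "word set \<Rightarrow> op set \<Rightarrow> op set" where
  "unital_cstar_gen L G = \<Inter>{S. S \<subseteq> bounded_ops L \<and> G \<subseteq> S \<and> idop L \<in> S \<and>
     (\<forall>a\<in>S. \<forall>b\<in>S. a + b \<in> S \<and> a \<circ> b \<in> S) \<and>
     (\<forall>c. \<forall>a\<in>S. opscale c a \<in> S) \<and> (\<forall>a\<in>S. adjoint L a \<in> S) \<and> norm_closed L S}"

definition closed_span :: "word set \<Rightarrow> op set \<Rightarrow> op set" where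
  "closed_span L G = \<Inter>{V. V \<subseteq> bounded_ops L \<and> G \<subseteq> V \<and> 0 \<in> V \<and>
     (\<forall>a\<in>V. \<forall>b\<in>V. a + b \<in> V) \<and> (\<forall>c. \<forall>a\<in>V. opscale c a \<in> V) \<and> norm_closed L V}"

text \<open>T_mu e_w = e_{mu*w} if mu*w in L, else 0.\<close>
definition shift :: "word set \<Rightarrow> word \<Rightarrow> op" where
  "shift L \<mu> = (\<lambda>f. if f \<in> ell2 L then
      (\<lambda>v. if v \<in> L \<and> (\<exists>w\<in>L. v = tcat \<mu> w) then f (THE w. v = tcat \<mu> w) else 0)
    else 0)"

definition checkers :: "word set \<Rightarrow> op set" where
  "checkers L = unital_cstar_gen L {adjoint L (shift L \<mu>) \<circ> shift L \<mu> | \<mu>. \<mu> \<in> L}"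

definition Xfib :: "word set \<Rightarrow> (nat \<Rightarrow> nat) \<Rightarrow> op set" where
  "Xfib L n = closed_span L {shift L \<mu> \<circ> a | \<mu> a. \<mu> \<in> L \<and> a \<in> checkers L \<and> tlen \<mu> = n}"

definition ker_phi :: "word set \<Rightarrow> nat \<Rightarrow> op set" where
  "ker_phi L i = {a \<in> checkers L. \<forall>\<xi>\<in>Xfib L (unitvec i). a \<circ> \<xi> = 0}"

definition annihilator :: "word set \<Rightarrow> op set \<Rightarrow> op set" where
  "annihilator L K = {a \<in> checkers L. \<forall>b\<in>K. a \<circ> b = 0}"

definition JF :: "word set \<Rightarrow> nat set \<Rightarrow> op set" where
  "JF L F = annihilator L (\<Inter>i\<in>F. ker_phi L i)"

definition IF :: "nat \<Rightarrow> word set \<Rightarrow> nat set \<Rightarrow> op set" where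
  "IF N L F = {a \<in> JF L F. \<forall>m. (\<forall>j. j \<notin> {1..N} \<longrightarrow> m j = 0) \<and> (\<forall>i\<in>F. m i = 0) \<longrightarrow>
      (\<forall>\<xi>\<in>Xfib L m. \<forall>\<eta>\<in>Xfib L m. adjoint L \<xi> \<circ> a \<circ> \<eta> \<in> JF L F)}"

definition Pproj :: "nat \<Rightarrow> word set \<Rightarrow> nat \<Rightarrow> op" where
  "Pproj d L i = (\<Sum>k\<in>{1..d}. shift L (delta i k) \<circ> adjoint L (shift L (delta i k)))"

definition QF :: "nat \<Rightarrow> word set \<Rightarrow> nat set \<Rightarrow> op" where
  "QF d L F = foldr (\<lambda>i acc. (idop L - Pproj d L i) \<circ> acc) (sorted_list_of_set F) (idop L)"

end

theory Submission
  imports Defs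
begin

(* Everything reduces to diagonal operators on the space l2 of Lambda*. A generator T_mu* T_mu of
   the algebra of checkers A multiplies by the indicator of {w. mu w : Lambda*}, and the bounded
   multiplication operators form a norm-closed unital *-algebra, so every element of A is diagonal;
   so is Q_F, which multiplies by the indicator of the words that are empty in every coordinate of
   F. Elements of the fibre X_m are weighted shifts of degree m, and for such xi, eta and diagonal
   a the operator xi* a eta is diagonal with a finite formula. On generators, (T_mu b)* a (T_nu b')
   is zero for mu ~= nu and equals b* (T_mu* a T_mu) b' otherwise, and compression by T_mu
   preserves A; by linearity and continuity xi* a eta lies in A for all xi, eta in X_m.

   Now a lies in ker phi_i iff its diagonal vanishes on the words with nonempty i-th coordinate,
   which gives the description of the intersection of the kernels. If a Q_F = 0, the diagonal of a
   is supported where that of every b in the intersection vanishes, so a annihilates it; the same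
   holds for xi* a eta when m vanishes on F, because prefixing a word by a word of such a degree
   keeps the coordinates in F empty. Finally, Q_F in A makes Q_F an idempotent of the intersection
   of the kernels, so J_F is killed by Q_F and I_F = A (I - Q_F). *)

definition basis :: "word \<Rightarrow> vec" where "basis x = (\<lambda>y. if y = x then 1 else 0)"

lemma ell2_vanishes: "f \<in> ell2 L \<Longrightarrow> x \<notin> L \<Longrightarrow> f x = 0"
  by (simp add: ell2_def)

lemma ell2_summable: "f \<in> ell2 L \<Longrightarrow> (\<lambda>x. (cmod (f x))^2) summable_on UNIV"
  by (simp add: ell2_def)

lemma ell2_zero[simp]: "(0::vec) \<in> ell2 L"
  by (simp add: ell2_def)

lemma ell2_zero_fun[simp]: "(\<lambda>x. 0) \<in> ell2 L"
  using ell2_zero by (simp add: zero_fun_def)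

lemma l2norm_zero[simp]: "l2norm 0 = 0" "l2norm (\<lambda>x. 0) = 0"
  by (simp_all add: l2norm_def)

lemma l2norm_nonneg: "l2norm f \<ge> 0"
  unfolding l2norm_def by (simp add: infsum_nonneg)

lemma ell2_dominated:
  assumes f: "f \<in> ell2 L" and le: "\<And>x. cmod (g x) \<le> C * cmod (f x)"
    and van: "\<And>x. x \<notin> L \<Longrightarrow> g x = 0"
  shows "g \<in> ell2 L" "l2norm g \<le> \<bar>C\<bar> * l2norm f"
proof -
  have sq: "(cmod (g x))^2 \<le> C^2 * (cmod (f x))^2" for x
  proof -
    have "0 \<le> cmod (g x)" by simp
    hence "(cmod (g x))^2 \<le> (C * cmod (f x))^2" by (rule power_mono[OF le[of x]])
    thus ?thesis by (simp add: power_mult_distrib)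
  qed
  have s2: "(\<lambda>x. C^2 * (cmod (f x))^2) summable_on UNIV"
    using ell2_summable[OF f] by (rule summable_on_cmult_right)
  have sg: "(\<lambda>x. (cmod (g x))^2) summable_on UNIV"
    by (rule summable_on_comparison_test[OF s2]) (use sq in auto)
  thus "g \<in> ell2 L" using van by (simp add: ell2_def)
  have "(\<Sum>\<^sub>\<infinity>x. (cmod (g x))^2) \<le> (\<Sum>\<^sub>\<infinity>x. C^2 * (cmod (f x))^2)"
    by (rule infsum_mono[OF sg s2]) (use sq in auto)
  also have "\<dots> = C^2 * (\<Sum>\<^sub>\<infinity>x. (cmod (f x))^2)"
    by (rule infsum_cmult_right) (use ell2_summable[OF f] in auto)
  finally have "sqrt (\<Sum>\<^sub>\<infinity>x. (cmod (g x))^2) \<le> sqrt (C^2 * (\<Sum>\<^sub>\<infinity>x. (cmod (f x))^2))"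
    by (rule real_sqrt_le_mono)
  thus "l2norm g \<le> \<bar>C\<bar> * l2norm f"
    by (simp add: l2norm_def real_sqrt_mult)
qed

lemma ell2_scale:
  assumes f: "f \<in> ell2 L"
  shows "(\<lambda>x. c * f x) \<in> ell2 L" "l2norm (\<lambda>x. c * f x) = cmod c * l2norm f"
proof -
  show "(\<lambda>x. c * f x) \<in> ell2 L"
    by (rule ell2_dominated(1)[OF f, of _ "cmod c"]) (auto simp: norm_mult ell2_vanishes[OF f])
  have "(\<Sum>\<^sub>\<infinity>x. (cmod (c * f x))^2) = (\<Sum>\<^sub>\<infinity>x. (cmod c)^2 * (cmod (f x))^2)"
    by (simp add: norm_mult power_mult_distrib)
  also have "\<dots> = (cmod c)^2 * (\<Sum>\<^sub>\<infinity>x. (cmod (f x))^2)"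
    by (rule infsum_cmult_right) (use ell2_summable[OF f] in auto)
  finally show "l2norm (\<lambda>x. c * f x) = cmod c * l2norm f"
    by (simp add: l2norm_def real_sqrt_mult)
qed

lemma ell2_add:
  assumes f: "f \<in> ell2 L" and g: "g \<in> ell2 L"
  shows "f + g \<in> ell2 L" "l2norm (f + g) \<le> 2 * (l2norm f + l2norm g)"
proof -
  have sq: "(cmod ((f+g) x))^2 \<le> 2 * (cmod (f x))^2 + 2 * (cmod (g x))^2" for x
  proof -
    have "cmod ((f+g) x) \<le> cmod (f x) + cmod (g x)" by (simp add: norm_triangle_ineq)
    hence "(cmod ((f+g) x))^2 \<le> (cmod (f x) + cmod (g x))^2" by (simp add: power_mono)
    also have "\<dots> \<le> 2 * (cmod (f x))^2 + 2 * (cmod (g x))^2"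
    proof -
      have "0 \<le> (cmod (f x) - cmod (g x))^2" by simp
      thus ?thesis unfolding power2_sum power2_diff by linarith
    qed
    finally show ?thesis .
  qed
  have s2: "(\<lambda>x. 2 * (cmod (f x))^2 + 2 * (cmod (g x))^2) summable_on UNIV"
    by (intro summable_on_add summable_on_cmult_right ell2_summable[OF f] ell2_summable[OF g])
  have sg: "(\<lambda>x. (cmod ((f+g) x))^2) summable_on UNIV"
    by (rule summable_on_comparison_test[OF s2]) (use sq in auto)
  thus "f + g \<in> ell2 L" using ell2_vanishes[OF f] ell2_vanishes[OF g] by (simp add: ell2_def)
  define A where "A = (\<Sum>\<^sub>\<infinity>x. (cmod (f x))^2)"
  define B where "B = (\<Sum>\<^sub>\<infinity>x. (cmod (g x))^2)"
  have A0: "A \<ge> 0" "B \<ge> 0" unfolding A_def B_def by (simp_all add: infsum_nonneg)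
  have "(\<Sum>\<^sub>\<infinity>x. (cmod ((f+g) x))^2) \<le> (\<Sum>\<^sub>\<infinity>x. 2 * (cmod (f x))^2 + 2 * (cmod (g x))^2)"
    by (rule infsum_mono[OF sg s2]) (use sq in auto)
  also have "\<dots> = 2 * A + 2 * B"
    unfolding A_def B_def
    by (subst infsum_add) (auto intro!: summable_on_cmult_right ell2_summable f g simp: infsum_cmult_right ell2_summable[OF f] ell2_summable[OF g])
  also have "\<dots> \<le> (2 * (sqrt A + sqrt B))^2"
  proof -
    have "0 \<le> sqrt A * sqrt B" using A0 by simp
    moreover have "(sqrt A)^2 = A" "(sqrt B)^2 = B" using A0 by simp_all
    ultimately show ?thesis unfolding power_mult_distrib power2_sum by simp
  qed
  finally have "sqrt (\<Sum>\<^sub>\<infinity>x. (cmod ((f+g) x))^2) \<le> sqrt ((2 * (sqrt A + sqrt B))^2)"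
    by (rule real_sqrt_le_mono)
  thus "l2norm (f + g) \<le> 2 * (l2norm f + l2norm g)"
    using A0 by (simp add: l2norm_def A_def B_def)
qed

lemma norm_le_l2norm:
  assumes f: "f \<in> ell2 L" shows "cmod (f x) \<le> l2norm f"
proof -
  have "sum (\<lambda>x. (cmod (f x))^2) {x} \<le> (\<Sum>\<^sub>\<infinity>x. (cmod (f x))^2)"
    by (rule finite_sum_le_infsum[OF ell2_summable[OF f]]) auto
  thus ?thesis unfolding l2norm_def by (simp add: real_le_rsqrt)
qed

lemma l2norm_eq_0D:
  assumes f: "f \<in> ell2 L" "l2norm f = 0" shows "f = 0"
  using norm_le_l2norm[OF f(1)] f(2) by (auto intro!: ext)

lemma basis_ell2: "x \<in> L \<Longrightarrow> basis x \<in> ell2 L"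
proof -
  assume x: "x \<in> L"
  have "(\<lambda>y. (cmod (basis x y))^2) summable_on {x}" by simp
  moreover have "(\<lambda>y. (cmod (basis x y))^2) summable_on UNIV \<longleftrightarrow> (\<lambda>y. (cmod (basis x y))^2) summable_on {x}"
    by (rule summable_on_cong_neutral; auto simp: basis_def)
  ultimately have "(\<lambda>y. (cmod (basis x y))^2) summable_on UNIV" by simp
  thus ?thesis using x unfolding ell2_def by (auto simp: basis_def)
qed

lemma l2norm_basis: "l2norm (basis x) = 1"
proof -
  have "(\<Sum>\<^sub>\<infinity>y. (cmod (basis x y))^2) = (\<Sum>\<^sub>\<infinity>y\<in>{x}. (cmod (basis x y))^2)"
    by (rule infsum_cong_neutral) (auto simp: basis_def)
  thus ?thesis by (simp add: l2norm_def basis_def)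
qed

lemma l2inner_basis: "l2inner h (basis x) = cnj (h x)"
proof -
  have "(\<Sum>\<^sub>\<infinity>y. cnj (h y) * basis x y) = (\<Sum>\<^sub>\<infinity>y\<in>{x}. cnj (h y) * basis x y)"
    by (rule infsum_cong_neutral) (auto simp: basis_def)
  thus ?thesis by (simp add: l2inner_def basis_def)
qed

lemma l2inner_summable:
  assumes f: "f \<in> ell2 L" and g: "g \<in> ell2 L"
  shows "(\<lambda>x. cnj (f x) * g x) summable_on UNIV"
proof -
  have s2: "(\<lambda>x. (cmod (f x))^2 + (cmod (g x))^2) summable_on UNIV"
    by (intro summable_on_add ell2_summable[OF f] ell2_summable[OF g])
  have "(\<lambda>x. norm (cnj (f x) * g x)) summable_on UNIV"
  proof (rule summable_on_comparison_test[OF s2])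
    fix x
    show "norm (cnj (f x) * g x) \<le> (cmod (f x))^2 + (cmod (g x))^2"
    proof -
      have "0 \<le> (cmod (f x) - cmod (g x))^2" by simp
      moreover have "0 \<le> cmod (f x) * cmod (g x)" by simp
      ultimately show ?thesis unfolding power2_diff norm_mult by (simp, linarith)
    qed
  qed simp
  thus ?thesis by (simp add: summable_on_iff_abs_summable_on_complex)
qed

lemma l2inner_add_left:
  assumes "f \<in> ell2 L" "g \<in> ell2 L" "h \<in> ell2 L"
  shows "l2inner (f + g) h = l2inner f h + l2inner g h"
  unfolding l2inner_def
  using infsum_add[OF l2inner_summable[OF assms(1,3)] l2inner_summable[OF assms(2,3)]]
  by (simp add: distrib_right)

lemma l2inner_add_right:
  assumes "f \<in> ell2 L" "g \<in> ell2 L" "h \<in> ell2 L"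
  shows "l2inner f (g + h) = l2inner f g + l2inner f h"
  unfolding l2inner_def
  using infsum_add[OF l2inner_summable[OF assms(1,2)] l2inner_summable[OF assms(1,3)]]
  by (simp add: distrib_left)

lemma sum_fun_apply: "(sum f A) x = sum (\<lambda>a. f a x) A"
  by (induction A rule: infinite_finite_induct) auto

lemma bounded_opsD:
  assumes "T \<in> bounded_ops L"
  shows bounded_op_ell2: "f \<in> ell2 L \<Longrightarrow> T f \<in> ell2 L"
    and bounded_op_add: "f \<in> ell2 L \<Longrightarrow> g \<in> ell2 L \<Longrightarrow> T (f + g) = T f + T g"
    and bounded_op_scale: "f \<in> ell2 L \<Longrightarrow> T (\<lambda>x. c * f x) = (\<lambda>x. c * T f x)"
    and bounded_op_outside: "f \<notin> ell2 L \<Longrightarrow> T f = 0"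
  using assms by (auto simp: bounded_ops_def)

lemma bounded_op_bound:
  assumes "T \<in> bounded_ops L"
  shows "\<exists>C\<ge>0. \<forall>f\<in>ell2 L. l2norm (T f) \<le> C * l2norm f"
proof -
  obtain C where C: "\<forall>f\<in>ell2 L. l2norm (T f) \<le> C * l2norm f"
    using assms by (auto simp: bounded_ops_def)
  have "\<forall>f\<in>ell2 L. l2norm (T f) \<le> max C 0 * l2norm f"
  proof
    fix f assume f: "f \<in> ell2 L"
    have "C * l2norm f \<le> max C 0 * l2norm f" by (rule mult_right_mono) (auto simp: l2norm_nonneg)
    thus "l2norm (T f) \<le> max C 0 * l2norm f" using C f by force
  qed
  thus ?thesis by (intro exI[of _ "max C 0"]) auto
qed

lemma bounded_opsI:
  assumes "\<And>f. f \<in> ell2 L \<Longrightarrow> T f \<in> ell2 L"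
    and "\<And>f g. f \<in> ell2 L \<Longrightarrow> g \<in> ell2 L \<Longrightarrow> T (f + g) = T f + T g"
    and "\<And>c f. f \<in> ell2 L \<Longrightarrow> T (\<lambda>x. c * f x) = (\<lambda>x. c * T f x)"
    and "\<And>f. f \<in> ell2 L \<Longrightarrow> l2norm (T f) \<le> C * l2norm f"
    and "\<And>f. f \<notin> ell2 L \<Longrightarrow> T f = 0"
  shows "T \<in> bounded_ops L"
  using assms unfolding bounded_ops_def by blast

lemma bounded_op_zero: assumes "T \<in> bounded_ops L" shows "T 0 = 0"
proof -
  have "T (\<lambda>x. 0 * (0::vec) x) = (\<lambda>x. 0 * T 0 x)" by (rule bounded_op_scale[OF assms]) simp
  thus ?thesis by (simp add: zero_fun_def)
qed

lemma bounded_ops_add: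
  assumes S: "S \<in> bounded_ops L" and T: "T \<in> bounded_ops L"
  shows "S + T \<in> bounded_ops L"
proof -
  obtain C1 where C1: "C1 \<ge> 0" "\<forall>f\<in>ell2 L. l2norm (S f) \<le> C1 * l2norm f" using bounded_op_bound[OF S] by auto
  obtain C2 where C2: "C2 \<ge> 0" "\<forall>f\<in>ell2 L. l2norm (T f) \<le> C2 * l2norm f" using bounded_op_bound[OF T] by auto
  show ?thesis
  proof (rule bounded_opsI[where C = "2 * (C1 + C2)"])
    fix f assume f: "f \<in> ell2 L"
    show "(S + T) f \<in> ell2 L" using f by (simp add: ell2_add bounded_op_ell2[OF S] bounded_op_ell2[OF T])
    have "l2norm (S f + T f) \<le> 2 * (l2norm (S f) + l2norm (T f))"
      by (rule ell2_add(2)[OF bounded_op_ell2[OF S f] bounded_op_ell2[OF T f]])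
    also have "\<dots> \<le> 2 * (C1 * l2norm f + C2 * l2norm f)"
    proof -
      have "l2norm (S f) \<le> C1 * l2norm f" "l2norm (T f) \<le> C2 * l2norm f" using C1(2) C2(2) f by auto
      thus ?thesis by (intro mult_left_mono add_mono) auto
    qed
    finally show "l2norm ((S + T) f) \<le> 2 * (C1 + C2) * l2norm f" by (simp add: algebra_simps)
  next
    fix f g assume "f \<in> ell2 L" "g \<in> ell2 L"
    thus "(S + T) (f + g) = (S + T) f + (S + T) g"
      by (simp add: bounded_op_add[OF S] bounded_op_add[OF T] algebra_simps)
  next
    fix c f assume "f \<in> ell2 L"
    thus "(S + T) (\<lambda>x. c * f x) = (\<lambda>x. c * (S + T) f x)"
      by (simp add: bounded_op_scale[OF S] bounded_op_scale[OF T] fun_eq_iff algebra_simps)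
  next
    fix f assume "f \<notin> ell2 L"
    thus "(S + T) f = 0" by (simp add: bounded_op_outside[OF S] bounded_op_outside[OF T])
  qed
qed

lemma bounded_ops_opscale:
  assumes T: "T \<in> bounded_ops L"
  shows "opscale c T \<in> bounded_ops L"
proof -
  obtain C where C: "C \<ge> 0" "\<forall>f\<in>ell2 L. l2norm (T f) \<le> C * l2norm f" using bounded_op_bound[OF T] by auto
  show ?thesis
  proof (rule bounded_opsI[where C = "cmod c * C"])
    fix f assume f: "f \<in> ell2 L"
    show "opscale c T f \<in> ell2 L" unfolding opscale_def by (rule ell2_scale) (rule bounded_op_ell2[OF T f])
    have "l2norm (opscale c T f) = cmod c * l2norm (T f)"
      unfolding opscale_def by (rule ell2_scale) (rule bounded_op_ell2[OF T f])
    also have "\<dots> \<le> cmod c * (C * l2norm f)" using C f by (simp add: mult_left_mono)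
    finally show "l2norm (opscale c T f) \<le> cmod c * C * l2norm f" by simp
  next
    fix f g assume "f \<in> ell2 L" "g \<in> ell2 L"
    thus "opscale c T (f + g) = opscale c T f + opscale c T g"
      by (simp add: opscale_def bounded_op_add[OF T] fun_eq_iff algebra_simps)
  next
    fix c' f assume "f \<in> ell2 L"
    thus "opscale c T (\<lambda>x. c' * f x) = (\<lambda>x. c' * opscale c T f x)"
      by (simp add: opscale_def bounded_op_scale[OF T] fun_eq_iff algebra_simps)
  next
    fix f assume "f \<notin> ell2 L"
    thus "opscale c T f = 0" by (simp add: opscale_def bounded_op_outside[OF T] fun_eq_iff)
  qed
qed

lemma opscale_minus_one: "opscale (-1) T = - T"
  by (auto simp: opscale_def fun_eq_iff)

lemma bounded_ops_uminus: "T \<in> bounded_ops L \<Longrightarrow> - T \<in> bounded_ops L"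
  using bounded_ops_opscale[of T L "-1"] by (simp add: opscale_minus_one)

lemma bounded_ops_diff:
  "S \<in> bounded_ops L \<Longrightarrow> T \<in> bounded_ops L \<Longrightarrow> S - T \<in> bounded_ops L"
  using bounded_ops_add[OF _ bounded_ops_uminus, of S L T] by simp

lemma bounded_ops_comp:
  assumes S: "S \<in> bounded_ops L" and T: "T \<in> bounded_ops L"
  shows "S \<circ> T \<in> bounded_ops L"
proof -
  obtain C1 where C1: "C1 \<ge> 0" "\<forall>f\<in>ell2 L. l2norm (S f) \<le> C1 * l2norm f" using bounded_op_bound[OF S] by auto
  obtain C2 where C2: "C2 \<ge> 0" "\<forall>f\<in>ell2 L. l2norm (T f) \<le> C2 * l2norm f" using bounded_op_bound[OF T] by auto
  show ?thesis
  proof (rule bounded_opsI[where C = "C1 * C2"])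
    fix f assume f: "f \<in> ell2 L"
    show "(S \<circ> T) f \<in> ell2 L" using f by (simp add: bounded_op_ell2[OF S] bounded_op_ell2[OF T])
    have "l2norm (S (T f)) \<le> C1 * l2norm (T f)" using C1 bounded_op_ell2[OF T f] by auto
    also have "\<dots> \<le> C1 * (C2 * l2norm f)" using C1 C2 f by (simp add: mult_left_mono)
    finally show "l2norm ((S \<circ> T) f) \<le> C1 * C2 * l2norm f" by simp
  next
    fix f g assume "f \<in> ell2 L" "g \<in> ell2 L"
    thus "(S \<circ> T) (f + g) = (S \<circ> T) f + (S \<circ> T) g"
      by (simp add: bounded_op_add[OF S] bounded_op_add[OF T] bounded_op_ell2[OF T])
  next
    fix c f assume "f \<in> ell2 L"
    thus "(S \<circ> T) (\<lambda>x. c * f x) = (\<lambda>x. c * (S \<circ> T) f x)"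
      by (simp add: bounded_op_scale[OF S] bounded_op_scale[OF T] bounded_op_ell2[OF T])
  next
    fix f assume "f \<notin> ell2 L"
    thus "(S \<circ> T) f = 0" by (simp add: bounded_op_outside[OF T] bounded_op_zero[OF S])
  qed
qed

lemma bounded_ops_zero: "(0::op) \<in> bounded_ops L"
  by (rule bounded_opsI[where C=0]) (auto simp: zero_fun_def)

lemma bounded_ops_idop: "idop L \<in> bounded_ops L"
  by (rule bounded_opsI[where C=1]) (auto simp: idop_def ell2_add ell2_scale zero_fun_def)

lemma bounded_ops_sum: "finite A \<Longrightarrow> (\<And>a. a \<in> A \<Longrightarrow> f a \<in> bounded_ops L) \<Longrightarrow> sum f A \<in> bounded_ops L"
  by (induction A rule: finite_induct) (auto intro: bounded_ops_zero bounded_ops_add)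

lemma opnorm_set:
  assumes T: "T \<in> bounded_ops L"
  shows "bdd_above {l2norm (T f) | f. f \<in> ell2 L \<and> l2norm f \<le> 1}"
    "0 \<in> {l2norm (T f) | f. f \<in> ell2 L \<and> l2norm f \<le> 1}"
proof -
  obtain C where C: "C \<ge> 0" "\<forall>f\<in>ell2 L. l2norm (T f) \<le> C * l2norm f" using bounded_op_bound[OF T] by auto
  show "bdd_above {l2norm (T f) | f. f \<in> ell2 L \<and> l2norm f \<le> 1}"
  proof (rule bdd_aboveI[where M = C], clarify)
    fix f assume f: "f \<in> ell2 L" "l2norm f \<le> 1"
    have "l2norm (T f) \<le> C * l2norm f" using C f by auto
    also have "\<dots> \<le> C" using C f by (simp add: mult_left_le)
    finally show "l2norm (T f) \<le> C" .
  qed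
  show "0 \<in> {l2norm (T f) | f. f \<in> ell2 L \<and> l2norm f \<le> 1}"
    by (rule CollectI, rule exI[of _ 0]) (simp add: bounded_op_zero[OF T])
qed

lemma opnorm_upper:
  assumes T: "T \<in> bounded_ops L" and f: "f \<in> ell2 L" "l2norm f \<le> 1"
  shows "l2norm (T f) \<le> opnorm L T"
  unfolding opnorm_def by (rule cSup_upper) (use f opnorm_set[OF T] in auto)

lemma opnorm_nonneg: "T \<in> bounded_ops L \<Longrightarrow> opnorm L T \<ge> 0"
  using opnorm_upper[of T L 0] by (simp add: bounded_op_zero del: zero_fun_def)

lemma opnorm_bound:
  assumes T: "T \<in> bounded_ops L" and f: "f \<in> ell2 L"
  shows "l2norm (T f) \<le> opnorm L T * l2norm f"
proof (cases "l2norm f = 0")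
  case True
  hence "f = 0" using l2norm_eq_0D f by blast
  thus ?thesis by (simp add: bounded_op_zero[OF T])
next
  case False
  define n where "n = l2norm f"
  have n: "n > 0" using False l2norm_nonneg[of f] unfolding n_def by linarith
  define c where "c = complex_of_real (1/n)"
  have cn: "cmod c = 1/n" using n unfolding c_def by (simp del: of_real_divide)
  define g where "g = (\<lambda>x. c * f x)"
  have g: "g \<in> ell2 L" "l2norm g = 1"
    unfolding g_def using ell2_scale[OF f, of c] n cn by (auto simp: n_def)
  have "l2norm (T g) = (1/n) * l2norm (T f)"
    unfolding g_def bounded_op_scale[OF T f] using ell2_scale(2)[OF bounded_op_ell2[OF T f], of c] cn
    by simp
  moreover have "l2norm (T g) \<le> opnorm L T" using opnorm_upper[OF T g(1)] g(2) by simp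
  ultimately have "(1/n) * l2norm (T f) \<le> opnorm L T" by simp
  thus ?thesis using n unfolding n_def[symmetric] by (simp add: field_simps)
qed

lemma opnorm_least:
  assumes T: "T \<in> bounded_ops L" and K: "K \<ge> 0"
    and b: "\<And>f. f \<in> ell2 L \<Longrightarrow> l2norm (T f) \<le> K * l2norm f"
  shows "opnorm L T \<le> K"
  unfolding opnorm_def
proof (rule cSup_least)
  show "{l2norm (T f) | f. f \<in> ell2 L \<and> l2norm f \<le> 1} \<noteq> {}" using opnorm_set(2)[OF T] by blast
next
  fix x assume "x \<in> {l2norm (T f) | f. f \<in> ell2 L \<and> l2norm f \<le> 1}"
  then obtain f where f: "f \<in> ell2 L" "l2norm f \<le> 1" "x = l2norm (T f)" by auto
  have "l2norm (T f) \<le> K * l2norm f" using b f by auto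
  also have "\<dots> \<le> K" using K f by (simp add: mult_left_le)
  finally show "x \<le> K" using f by simp
qed

lemma opnorm_bound_pointwise:
  assumes T: "T \<in> bounded_ops L" and f: "f \<in> ell2 L"
  shows "cmod (T f x) \<le> opnorm L T * l2norm f"
  using norm_le_l2norm[OF bounded_op_ell2[OF T f], of x] opnorm_bound[OF T f] by linarith

lemma opnorm_bound_basis:
  assumes T: "T \<in> bounded_ops L" and w: "w \<in> L"
  shows "cmod (T (basis w) x) \<le> opnorm L T"
  using opnorm_bound_pointwise[OF T basis_ell2[OF w]] by (simp add: l2norm_basis)

lemma opnorm_tendsto_pointwise:
  assumes s: "\<And>n. s n \<in> bounded_ops L" and T: "T \<in> bounded_ops L"
    and lim: "(\<lambda>n. opnorm L (s n - T)) \<longlonglongrightarrow> 0" and f: "f \<in> ell2 L"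
  shows "(\<lambda>n. s n f x) \<longlonglongrightarrow> T f x"
proof -
  have "(\<lambda>n. s n f x - T f x) \<longlonglongrightarrow> 0"
  proof (rule Lim_null_comparison)
    show "\<forall>\<^sub>F n in sequentially. norm (s n f x - T f x) \<le> opnorm L (s n - T) * l2norm f"
    proof (rule always_eventually, rule allI)
      fix n
      have "norm ((s n - T) f x) \<le> opnorm L (s n - T) * l2norm f"
        by (rule opnorm_bound_pointwise[OF bounded_ops_diff[OF s T] f])
      thus "norm (s n f x - T f x) \<le> opnorm L (s n - T) * l2norm f" by simp
    qed
    show "(\<lambda>n. opnorm L (s n - T) * l2norm f) \<longlonglongrightarrow> 0"
      using tendsto_mult_left_zero[OF lim, of "l2norm f"] by simp
  qed
  thus ?thesis by (rule LIM_zero_cancel)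
qed

definition wtake :: "(nat \<Rightarrow> nat) \<Rightarrow> word \<Rightarrow> word" where
  "wtake m v = (\<lambda>i. take (m i) (v i))"
definition wdrop :: "(nat \<Rightarrow> nat) \<Rightarrow> word \<Rightarrow> word" where
  "wdrop m v = (\<lambda>i. drop (m i) (v i))"
definition empty_word :: word where "empty_word = (\<lambda>i. [])"

lemma tcat_eq_iff:
  assumes "tlen \<mu> = m"
  shows "(v = tcat \<mu> w) \<longleftrightarrow> ((\<forall>i. m i \<le> length (v i)) \<and> wtake m v = \<mu> \<and> wdrop m v = w)"
proof
  assume v: "v = tcat \<mu> w"
  have ml: "m i = length (\<mu> i)" for i using assms by (simp add: tlen_def fun_eq_iff)
  show "(\<forall>i. m i \<le> length (v i)) \<and> wtake m v = \<mu> \<and> wdrop m v = w"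
    using v by (simp add: ml tcat_def wtake_def wdrop_def)
next
  assume h: "(\<forall>i. m i \<le> length (v i)) \<and> wtake m v = \<mu> \<and> wdrop m v = w"
  show "v = tcat \<mu> w"
  proof
    fix i
    have "v i = take (m i) (v i) @ drop (m i) (v i)" by simp
    also have "\<dots> = tcat \<mu> w i" using h by (simp add: tcat_def wtake_def wdrop_def fun_eq_iff)
    finally show "v i = tcat \<mu> w i" .
  qed
qed

lemma wdrop_wtake_tcat: "wdrop (tlen \<mu>) (tcat \<mu> w) = w" "wtake (tlen \<mu>) (tcat \<mu> w) = \<mu>"
  using tcat_eq_iff[of \<mu> "tlen \<mu>" "tcat \<mu> w" w] by auto

lemma tlen_le_length_tcat: "tlen \<mu> i \<le> length (tcat \<mu> w i)"
  by (simp add: tlen_def tcat_def)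

lemma tcat_right_cancel: "tcat \<mu> w = tcat \<mu> w' \<Longrightarrow> w = w'"
  by (metis wdrop_wtake_tcat(1))

lemma inj_tcat: "inj (tcat \<mu>)"
  by (rule injI) (rule tcat_right_cancel)

lemma tcat_empty_word[simp]: "tcat empty_word x = x" "tcat x empty_word = x"
  by (auto simp: tcat_def empty_word_def)

lemma tcat_assoc: "tcat (tcat a b) c = tcat a (tcat b c)"
  by (simp add: tcat_def)

lemma factorial_language_tcatD:
  assumes fl: "factorial_language d N L" and v: "tcat \<mu> w \<in> L"
  shows "\<mu> \<in> L" "w \<in> L"
proof -
  have cl: "\<forall>\<mu>\<in>L. \<forall>w \<nu> q. \<mu> = tcat (tcat w \<nu>) q \<longrightarrow> \<nu> \<in> L"
    using fl by (simp add: factorial_language_def)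
  show "\<mu> \<in> L" using cl v by (metis tcat_empty_word(1))
  show "w \<in> L" using cl v by (metis tcat_empty_word(2))
qed

definition shift_adj :: "word set \<Rightarrow> word \<Rightarrow> op" where
  "shift_adj L \<mu> = (\<lambda>g. if g \<in> ell2 L then (\<lambda>w. if w \<in> L \<and> tcat \<mu> w \<in> L then g (tcat \<mu> w) else 0) else 0)"

lemma shift_tcat:
  assumes f: "f \<in> ell2 L"
  shows "shift L \<mu> f (tcat \<mu> w) = (if tcat \<mu> w \<in> L \<and> w \<in> L then f w else 0)"
proof -
  have the: "(THE w'. tcat \<mu> w = tcat \<mu> w') = w"
    by (rule the_equality) (auto dest: tcat_right_cancel)
  show ?thesis using f by (auto simp: shift_def the dest: tcat_right_cancel)
qed

lemma shift_outside_range: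
  assumes "\<And>w. v \<noteq> tcat \<mu> w"
  shows "shift L \<mu> f v = 0"
  using assms by (auto simp: shift_def)

lemma shift_basis:
  assumes "w \<in> L" "tcat \<mu> w \<in> L"
  shows "shift L \<mu> (basis w) = basis (tcat \<mu> w)"
proof
  fix v
  show "shift L \<mu> (basis w) v = basis (tcat \<mu> w) v"
  proof (cases "\<exists>w'. v = tcat \<mu> w'")
    case True
    then obtain w' where v: "v = tcat \<mu> w'" by auto
    show ?thesis using assms unfolding v shift_tcat[OF basis_ell2[OF assms(1)]]
      by (auto simp: basis_def dest: tcat_right_cancel)
  next
    case False
    thus ?thesis by (auto simp: shift_outside_range basis_def)
  qed
qed

lemma shift_ell2:
  assumes f: "f \<in> ell2 L"
  shows "shift L \<mu> f \<in> ell2 L" "l2norm (shift L \<mu> f) \<le> l2norm f"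
proof -
  define h where "h = (\<lambda>v. (cmod (shift L \<mu> f v))^2)"
  have hc: "h (tcat \<mu> w) = (if tcat \<mu> w \<in> L \<and> w \<in> L then (cmod (f w))^2 else 0)" for w
    by (simp add: h_def shift_tcat[OF f])
  have hz: "h v = 0" if "v \<in> UNIV - range (tcat \<mu>)" for v
  proof -
    have "\<And>w. v \<noteq> tcat \<mu> w" using that by auto
    thus ?thesis by (simp add: h_def shift_outside_range)
  qed
  have s1: "(h \<circ> tcat \<mu>) summable_on UNIV"
    by (rule summable_on_comparison_test[OF ell2_summable[OF f]]) (auto simp: hc)
  hence s2: "h summable_on range (tcat \<mu>)" by (simp add: summable_on_reindex[OF inj_tcat])
  have eq: "h summable_on UNIV \<longleftrightarrow> h summable_on range (tcat \<mu>)"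
    by (rule summable_on_cong_neutral) (use hz in auto)
  have s3: "h summable_on UNIV" using eq s2 by simp
  show "shift L \<mu> f \<in> ell2 L" using s3 unfolding ell2_def h_def by (auto simp: shift_def)
  have "infsum h UNIV = infsum h (range (tcat \<mu>))"
    by (rule infsum_cong_neutral) (use hz in auto)
  also have "\<dots> = infsum (h \<circ> tcat \<mu>) UNIV" by (rule infsum_reindex[OF inj_tcat])
  also have "\<dots> \<le> (\<Sum>\<^sub>\<infinity>w. (cmod (f w))^2)"
    by (rule infsum_mono[OF s1 ell2_summable[OF f]]) (auto simp: hc)
  finally show "l2norm (shift L \<mu> f) \<le> l2norm f"
    unfolding l2norm_def h_def by (rule real_sqrt_le_mono)
qed

lemma shift_adj_ell2:
  assumes g: "g \<in> ell2 L"
  shows "shift_adj L \<mu> g \<in> ell2 L" "l2norm (shift_adj L \<mu> g) \<le> l2norm g"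
proof -
  define G where "G = (\<lambda>v. (cmod (g v))^2)"
  have sG: "G summable_on UNIV" using ell2_summable[OF g] by (simp add: G_def)
  have sG2: "G summable_on range (tcat \<mu>)" by (rule summable_on_subset[OF sG]) auto
  hence s1: "(G \<circ> tcat \<mu>) summable_on UNIV" by (simp add: summable_on_reindex[OF inj_tcat])
  have le: "(cmod (shift_adj L \<mu> g w))^2 \<le> (G \<circ> tcat \<mu>) w" for w
    using g by (simp add: shift_adj_def G_def)
  have s2: "(\<lambda>w. (cmod (shift_adj L \<mu> g w))^2) summable_on UNIV"
    by (rule summable_on_comparison_test[OF s1]) (use le in auto)
  show "shift_adj L \<mu> g \<in> ell2 L" using s2 g unfolding ell2_def by (auto simp: shift_adj_def)
  have "(\<Sum>\<^sub>\<infinity>w. (cmod (shift_adj L \<mu> g w))^2) \<le> infsum (G \<circ> tcat \<mu>) UNIV"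
    by (rule infsum_mono[OF s2 s1]) (use le in auto)
  also have "\<dots> = infsum G (range (tcat \<mu>))" by (rule infsum_reindex[OF inj_tcat, symmetric])
  also have "\<dots> \<le> infsum G UNIV"
    by (rule infsum_mono_neutral[OF sG2 sG]) (auto simp: G_def)
  finally show "l2norm (shift_adj L \<mu> g) \<le> l2norm g"
    unfolding l2norm_def G_def by (rule real_sqrt_le_mono)
qed

lemma shift_bounded: "shift L \<mu> \<in> bounded_ops L"
proof (rule bounded_opsI[where C=1])
  fix f assume f: "f \<in> ell2 L"
  show "shift L \<mu> f \<in> ell2 L" by (rule shift_ell2[OF f])
  show "l2norm (shift L \<mu> f) \<le> 1 * l2norm f" using shift_ell2(2)[OF f] by simp
next
  fix f g assume "f \<in> ell2 L" "g \<in> ell2 L"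
  thus "shift L \<mu> (f + g) = shift L \<mu> f + shift L \<mu> g"
    by (auto simp: shift_def ell2_add fun_eq_iff)
next
  fix c f assume "f \<in> ell2 L"
  thus "shift L \<mu> (\<lambda>x. c * f x) = (\<lambda>x. c * shift L \<mu> f x)"
    by (auto simp: shift_def ell2_scale fun_eq_iff)
next
  fix f assume "f \<notin> ell2 L"
  thus "shift L \<mu> f = 0" by (simp add: shift_def)
qed

lemma shift_adj_bounded: "shift_adj L \<mu> \<in> bounded_ops L"
proof (rule bounded_opsI[where C=1])
  fix f assume f: "f \<in> ell2 L"
  show "shift_adj L \<mu> f \<in> ell2 L" by (rule shift_adj_ell2[OF f])
  show "l2norm (shift_adj L \<mu> f) \<le> 1 * l2norm f" using shift_adj_ell2(2)[OF f] by simp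
next
  fix f g assume "f \<in> ell2 L" "g \<in> ell2 L"
  thus "shift_adj L \<mu> (f + g) = shift_adj L \<mu> f + shift_adj L \<mu> g"
    by (auto simp: shift_adj_def ell2_add fun_eq_iff)
next
  fix c f assume "f \<in> ell2 L"
  thus "shift_adj L \<mu> (\<lambda>x. c * f x) = (\<lambda>x. c * shift_adj L \<mu> f x)"
    by (auto simp: shift_adj_def ell2_scale fun_eq_iff)
next
  fix f assume "f \<notin> ell2 L"
  thus "shift_adj L \<mu> f = 0" by (simp add: shift_adj_def)
qed

lemma l2inner_shift_adj:
  assumes f: "f \<in> ell2 L" and g: "g \<in> ell2 L"
  shows "l2inner (shift_adj L \<mu> f) g = l2inner f (shift L \<mu> g)"
proof -
  define k where "k = (\<lambda>v. cnj (f v) * shift L \<mu> g v)"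
  have kz: "k v = 0" if "v \<in> UNIV - range (tcat \<mu>)" for v
  proof -
    have "\<And>w. v \<noteq> tcat \<mu> w" using that by auto
    thus ?thesis by (simp add: k_def shift_outside_range)
  qed
  have "l2inner f (shift L \<mu> g) = infsum k UNIV" by (simp add: l2inner_def k_def)
  also have "\<dots> = infsum k (range (tcat \<mu>))"
    by (rule infsum_cong_neutral) (use kz in auto)
  also have "\<dots> = infsum (k \<circ> tcat \<mu>) UNIV" by (rule infsum_reindex[OF inj_tcat])
  also have "\<dots> = l2inner (shift_adj L \<mu> f) g"
    unfolding l2inner_def using f g
    by (intro infsum_cong) (auto simp: k_def shift_adj_def shift_tcat[OF g])
  finally show ?thesis by simp
qed

definition is_adjoint :: "word set \<Rightarrow> op \<Rightarrow> op \<Rightarrow> bool" where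
  "is_adjoint L T S \<longleftrightarrow> S \<in> bounded_ops L \<and>
     (\<forall>f\<in>ell2 L. \<forall>g\<in>ell2 L. l2inner (S f) g = l2inner f (T g))"

lemma is_adjoint_unique:
  assumes "is_adjoint L T S1" "is_adjoint L T S2" shows "S1 = S2"
proof
  fix f
  have S1: "S1 \<in> bounded_ops L" and S2: "S2 \<in> bounded_ops L" using assms by (auto simp: is_adjoint_def)
  show "S1 f = S2 f"
  proof (cases "f \<in> ell2 L")
    case False thus ?thesis by (simp add: bounded_op_outside[OF S1] bounded_op_outside[OF S2])
  next
    case f: True
    show ?thesis
    proof
      fix x
      show "S1 f x = S2 f x"
      proof (cases "x \<in> L")
        case False thus ?thesis using ell2_vanishes[OF bounded_op_ell2[OF S1 f]] ell2_vanishes[OF bounded_op_ell2[OF S2 f]] by simp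
      next
        case True
        have "l2inner (S1 f) (basis x) = l2inner (S2 f) (basis x)"
          using assms f basis_ell2[OF True] by (simp add: is_adjoint_def)
        thus ?thesis by (simp add: l2inner_basis)
      qed
    qed
  qed
qed

lemma adjoint_eqI: "is_adjoint L T S \<Longrightarrow> adjoint L T = S"
  unfolding adjoint_def
  by (rule the_equality) (auto simp: is_adjoint_def[symmetric] intro: is_adjoint_unique)

lemma is_adjoint_bounded: "is_adjoint L T S \<Longrightarrow> S \<in> bounded_ops L" by (simp add: is_adjoint_def)

lemma is_adjoint_shift: "is_adjoint L (shift L \<mu>) (shift_adj L \<mu>)"
  by (simp add: is_adjoint_def shift_adj_bounded l2inner_shift_adj)

lemma is_adjoint_comp:
  assumes "is_adjoint L T1 S1" "is_adjoint L T2 S2" "T2 \<in> bounded_ops L"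
  shows "is_adjoint L (T1 \<circ> T2) (S2 \<circ> S1)"
  using assms unfolding is_adjoint_def
  by (auto intro: bounded_ops_comp simp: bounded_op_ell2)

lemma is_adjoint_add:
  assumes "is_adjoint L T1 S1" "is_adjoint L T2 S2" "T1 \<in> bounded_ops L" "T2 \<in> bounded_ops L"
  shows "is_adjoint L (T1 + T2) (S1 + S2)"
proof -
  have S1: "S1 \<in> bounded_ops L" and S2: "S2 \<in> bounded_ops L" using assms by (auto simp: is_adjoint_def)
  show ?thesis unfolding is_adjoint_def
  proof (intro conjI ballI)
    show "S1 + S2 \<in> bounded_ops L" by (rule bounded_ops_add[OF S1 S2])
    fix f g assume f: "f \<in> ell2 L" and g: "g \<in> ell2 L"
    have "l2inner ((S1 + S2) f) g = l2inner (S1 f) g + l2inner (S2 f) g"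
      by (simp add: l2inner_add_left[OF bounded_op_ell2[OF S1 f] bounded_op_ell2[OF S2 f] g])
    also have "\<dots> = l2inner f (T1 g) + l2inner f (T2 g)" using assms f g by (simp add: is_adjoint_def)
    also have "\<dots> = l2inner f ((T1 + T2) g)"
      by (simp add: l2inner_add_right[OF f bounded_op_ell2[OF assms(3) g] bounded_op_ell2[OF assms(4) g]])
    finally show "l2inner ((S1 + S2) f) g = l2inner f ((T1 + T2) g)" .
  qed
qed

lemma is_adjoint_zero: "is_adjoint L 0 0"
proof -
  have "(0::op) \<in> bounded_ops L" by (rule bounded_ops_zero)
  moreover have "\<forall>f\<in>ell2 L. \<forall>g\<in>ell2 L. l2inner ((0::op) f) g = l2inner f ((0::op) g)"
    by (simp add: l2inner_def)
  ultimately show ?thesis unfolding is_adjoint_def by blast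
qed

lemma is_adjoint_sum:
  "finite A \<Longrightarrow> (\<And>a. a \<in> A \<Longrightarrow> is_adjoint L (T a) (S a)) \<Longrightarrow> (\<And>a. a \<in> A \<Longrightarrow> T a \<in> bounded_ops L)
   \<Longrightarrow> is_adjoint L (sum T A) (sum S A)"
proof (induction A rule: finite_induct)
  case empty show ?case unfolding sum.empty by (rule is_adjoint_zero)
next
  case (insert a A)
  have "is_adjoint L (T a + sum T A) (S a + sum S A)"
    by (rule is_adjoint_add) (use insert in \<open>auto intro: bounded_ops_sum\<close>)
  thus ?case unfolding sum.insert[OF insert(1,2)] .
qed

section \<open>Diagonal operators\<close>

definition mult_op :: "word set \<Rightarrow> (word \<Rightarrow> complex) \<Rightarrow> op" where
  "mult_op L c = (\<lambda>f. if f \<in> ell2 L then (\<lambda>v. c v * f v) else 0)"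

definition bounded_on :: "word set \<Rightarrow> (word \<Rightarrow> complex) \<Rightarrow> bool" where
  "bounded_on L c \<longleftrightarrow> (\<exists>B. \<forall>v\<in>L. cmod (c v) \<le> B)"

definition diag_coeff :: "op \<Rightarrow> word \<Rightarrow> complex" where
  "diag_coeff a v = a (basis v) v"

lemma mult_op_ell2:
  assumes f: "f \<in> ell2 L" and B: "\<forall>v\<in>L. cmod (c v) \<le> B"
  shows "mult_op L c f \<in> ell2 L" "l2norm (mult_op L c f) \<le> \<bar>B\<bar> * l2norm f"
proof -
  have le: "cmod (c v * f v) \<le> B * cmod (f v)" for v
  proof (cases "v \<in> L")
    case True thus ?thesis using B by (simp add: norm_mult mult_right_mono)
  next
    case False thus ?thesis using ell2_vanishes[OF f] by simp
  qed
  have van: "v \<notin> L \<Longrightarrow> c v * f v = 0" for v using ell2_vanishes[OF f] by simp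
  show "mult_op L c f \<in> ell2 L" using ell2_dominated(1)[OF f, of "\<lambda>v. c v * f v", OF le van] f
    by (simp add: mult_op_def)
  show "l2norm (mult_op L c f) \<le> \<bar>B\<bar> * l2norm f"
    using ell2_dominated(2)[OF f, of "\<lambda>v. c v * f v", OF le van] f by (simp add: mult_op_def)
qed

lemma mult_op_bounded_ops:
  assumes B: "\<forall>v\<in>L. cmod (c v) \<le> B"
  shows "mult_op L c \<in> bounded_ops L"
proof (rule bounded_opsI[where C="\<bar>B\<bar>"])
  fix f assume f: "f \<in> ell2 L"
  show "mult_op L c f \<in> ell2 L" by (rule mult_op_ell2(1)[OF f B])
  show "l2norm (mult_op L c f) \<le> \<bar>B\<bar> * l2norm f" by (rule mult_op_ell2(2)[OF f B])
next
  fix f g assume "f \<in> ell2 L" "g \<in> ell2 L"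
  thus "mult_op L c (f + g) = mult_op L c f + mult_op L c g"
    by (simp add: mult_op_def ell2_add fun_eq_iff algebra_simps)
next
  fix k f assume "f \<in> ell2 L"
  thus "mult_op L c (\<lambda>x. k * f x) = (\<lambda>x. k * mult_op L c f x)"
    by (simp add: mult_op_def ell2_scale fun_eq_iff algebra_simps)
next
  fix f assume "f \<notin> ell2 L"
  thus "mult_op L c f = 0" by (simp add: mult_op_def)
qed

lemma mult_op_bounded: "bounded_on L c \<Longrightarrow> mult_op L c \<in> bounded_ops L"
  unfolding bounded_on_def using mult_op_bounded_ops by blast

lemma opnorm_mult_op_le:
  assumes B: "\<forall>v\<in>L. cmod (c v) \<le> B" and B0: "B \<ge> 0"
  shows "opnorm L (mult_op L c) \<le> B"
  by (rule opnorm_least[OF mult_op_bounded_ops[OF B] B0]) (use mult_op_ell2(2)[OF _ B] B0 in auto)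

lemma mult_op_cong:
  assumes "\<And>v. v \<in> L \<Longrightarrow> c v = c' v"
  shows "mult_op L c = mult_op L c'"
proof
  fix f show "mult_op L c f = mult_op L c' f"
    using assms by (auto simp: mult_op_def fun_eq_iff dest: ell2_vanishes)
qed

lemma mult_op_comp:
  assumes "bounded_on L c'"
  shows "mult_op L c \<circ> mult_op L c' = mult_op L (\<lambda>v. c v * c' v)"
proof
  fix f
  show "(mult_op L c \<circ> mult_op L c') f = mult_op L (\<lambda>v. c v * c' v) f"
  proof (cases "f \<in> ell2 L")
    case True
    have "mult_op L c' f \<in> ell2 L" using assms True unfolding bounded_on_def by (auto intro: mult_op_ell2)
    thus ?thesis using True by (simp add: mult_op_def fun_eq_iff)
  next
    case False
    have "(0::vec) \<in> ell2 L" by simp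
    thus ?thesis using False by (simp add: mult_op_def fun_eq_iff)
  qed
qed

lemma mult_op_add: "mult_op L c + mult_op L c' = mult_op L (\<lambda>v. c v + c' v)"
  by (auto simp: mult_op_def fun_eq_iff algebra_simps)

lemma mult_op_diff: "mult_op L c - mult_op L c' = mult_op L (\<lambda>v. c v - c' v)"
  by (auto simp: mult_op_def fun_eq_iff algebra_simps)

lemma opscale_mult_op: "opscale k (mult_op L c) = mult_op L (\<lambda>v. k * c v)"
  by (auto simp: mult_op_def opscale_def fun_eq_iff algebra_simps)

lemma mult_op_zero: "mult_op L (\<lambda>v. 0) = 0"
  by (auto simp: mult_op_def fun_eq_iff)

lemma idop_eq_mult_op: "idop L = mult_op L (\<lambda>v. 1)"
  by (auto simp: mult_op_def idop_def fun_eq_iff)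

lemma is_adjoint_mult_op:
  assumes "bounded_on L c"
  shows "is_adjoint L (mult_op L c) (mult_op L (\<lambda>v. cnj (c v)))"
proof -
  have "bounded_on L (\<lambda>v. cnj (c v))" using assms by (simp add: bounded_on_def)
  hence "mult_op L (\<lambda>v. cnj (c v)) \<in> bounded_ops L" by (rule mult_op_bounded)
  thus ?thesis unfolding is_adjoint_def
    by (auto simp: mult_op_def l2inner_def mult.commute mult.left_commute)
qed

lemma basis_not_ell2: "v \<notin> L \<Longrightarrow> basis v \<notin> ell2 L"
  by (auto simp: ell2_def basis_def)

lemma diag_coeff_mult_op: "v \<in> L \<Longrightarrow> diag_coeff (mult_op L c) v = c v"
  by (simp add: diag_coeff_def mult_op_def basis_ell2) (simp add: basis_def)

lemma diag_coeff_bound: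
  assumes a: "a \<in> bounded_ops L"
  shows "cmod (diag_coeff a v) \<le> opnorm L a"
proof (cases "v \<in> L")
  case True thus ?thesis unfolding diag_coeff_def by (rule opnorm_bound_basis[OF a])
next
  case False thus ?thesis using opnorm_nonneg[OF a] bounded_op_outside[OF a basis_not_ell2[OF False]] by (simp add: diag_coeff_def)
qed

lemma diag_coeff_add: "diag_coeff (a + b) v = diag_coeff a v + diag_coeff b v" by (simp add: diag_coeff_def)
lemma diag_coeff_diff: "diag_coeff (a - b) v = diag_coeff a v - diag_coeff b v" by (simp add: diag_coeff_def)
lemma diag_coeff_opscale: "diag_coeff (opscale k a) v = k * diag_coeff a v" by (simp add: diag_coeff_def opscale_def)

definition diag_ops :: "word set \<Rightarrow> op set" where
  "diag_ops L = {a \<in> bounded_ops L. a = mult_op L (diag_coeff a)}"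

lemma bounded_on_diag_coeff: "a \<in> bounded_ops L \<Longrightarrow> bounded_on L (diag_coeff a)"
  unfolding bounded_on_def using diag_coeff_bound by blast

lemma diag_ops_bounded: "a \<in> diag_ops L \<Longrightarrow> a \<in> bounded_ops L" by (simp add: diag_ops_def)
lemma diag_ops_eq: "a \<in> diag_ops L \<Longrightarrow> a = mult_op L (diag_coeff a)" by (simp add: diag_ops_def)
lemma diag_ops_bounded_on: "a \<in> diag_ops L \<Longrightarrow> bounded_on L (diag_coeff a)" by (simp add: diag_ops_def bounded_on_diag_coeff)

lemma mult_op_diag_ops: "bounded_on L c \<Longrightarrow> mult_op L c \<in> diag_ops L"
  unfolding diag_ops_def by (auto intro: mult_op_bounded mult_op_cong simp: diag_coeff_mult_op)

lemma diag_ops_add: "a \<in> diag_ops L \<Longrightarrow> b \<in> diag_ops L \<Longrightarrow> a + b \<in> diag_ops L"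
proof -
  assume a: "a \<in> diag_ops L" and b: "b \<in> diag_ops L"
  have "a + b = mult_op L (diag_coeff a) + mult_op L (diag_coeff b)" using diag_ops_eq[OF a] diag_ops_eq[OF b] by simp
  also have "\<dots> = mult_op L (diag_coeff (a + b))" unfolding mult_op_add by (rule mult_op_cong) (simp add: diag_coeff_add)
  finally show ?thesis unfolding diag_ops_def using bounded_ops_add[OF diag_ops_bounded[OF a] diag_ops_bounded[OF b]] by simp
qed

lemma diag_ops_opscale: "a \<in> diag_ops L \<Longrightarrow> opscale k a \<in> diag_ops L"
proof -
  assume a: "a \<in> diag_ops L"
  have "opscale k a = opscale k (mult_op L (diag_coeff a))" using diag_ops_eq[OF a] by simp
  also have "\<dots> = mult_op L (diag_coeff (opscale k a))" unfolding opscale_mult_op by (rule mult_op_cong) (simp add: diag_coeff_opscale)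
  finally show ?thesis unfolding diag_ops_def using bounded_ops_opscale[OF diag_ops_bounded[OF a]] by simp
qed

lemma diag_ops_comp: "a \<in> diag_ops L \<Longrightarrow> b \<in> diag_ops L \<Longrightarrow> a \<circ> b \<in> diag_ops L"
proof -
  assume a: "a \<in> diag_ops L" and b: "b \<in> diag_ops L"
  have "a \<circ> b = mult_op L (diag_coeff a) \<circ> mult_op L (diag_coeff b)" using diag_ops_eq[OF a] diag_ops_eq[OF b] by simp
  also have "\<dots> = mult_op L (\<lambda>v. diag_coeff a v * diag_coeff b v)" by (rule mult_op_comp[OF diag_ops_bounded_on[OF b]])
  finally have e: "a \<circ> b = mult_op L (\<lambda>v. diag_coeff a v * diag_coeff b v)" .
  have "bounded_on L (\<lambda>v. diag_coeff a v * diag_coeff b v)"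
  proof -
    have "cmod (diag_coeff a v * diag_coeff b v) \<le> opnorm L a * opnorm L b" for v
      unfolding norm_mult by (intro mult_mono diag_coeff_bound diag_ops_bounded a b) (auto intro: opnorm_nonneg diag_ops_bounded a)
    thus ?thesis by (auto simp: bounded_on_def)
  qed
  thus ?thesis unfolding e by (rule mult_op_diag_ops)
qed

lemma adjoint_diag_op: "a \<in> diag_ops L \<Longrightarrow> adjoint L a = mult_op L (\<lambda>v. cnj (diag_coeff a v))"
proof -
  assume a: "a \<in> diag_ops L"
  have "is_adjoint L (mult_op L (diag_coeff a)) (mult_op L (\<lambda>v. cnj (diag_coeff a v)))" by (rule is_adjoint_mult_op[OF diag_ops_bounded_on[OF a]])
  hence "is_adjoint L a (mult_op L (\<lambda>v. cnj (diag_coeff a v)))" using diag_ops_eq[OF a] by simp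
  thus ?thesis by (rule adjoint_eqI)
qed

lemma diag_ops_adjoint: "a \<in> diag_ops L \<Longrightarrow> adjoint L a \<in> diag_ops L"
proof -
  assume a: "a \<in> diag_ops L"
  have "bounded_on L (\<lambda>v. cnj (diag_coeff a v))" using diag_ops_bounded_on[OF a] by (simp add: bounded_on_def)
  thus ?thesis using adjoint_diag_op[OF a] mult_op_diag_ops by simp
qed

lemma diag_ops_idop: "idop L \<in> diag_ops L"
  unfolding idop_eq_mult_op by (rule mult_op_diag_ops) (auto simp: bounded_on_def)

lemma diag_ops_limit:
  assumes s: "\<And>n. s n \<in> diag_ops L" and T: "T \<in> bounded_ops L"
    and lim: "(\<lambda>n. opnorm L (s n - T)) \<longlonglongrightarrow> 0"
  shows "T \<in> diag_ops L"
proof -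
  have sb: "\<And>n. s n \<in> bounded_ops L" using s diag_ops_bounded by blast
  have "T = mult_op L (diag_coeff T)"
  proof
    fix f show "T f = mult_op L (diag_coeff T) f"
    proof (cases "f \<in> ell2 L")
      case False thus ?thesis by (simp add: bounded_op_outside[OF T] mult_op_def)
    next
      case f: True
      show ?thesis
      proof
        fix v show "T f v = mult_op L (diag_coeff T) f v"
        proof (cases "v \<in> L")
          case False thus ?thesis using ell2_vanishes[OF bounded_op_ell2[OF T f] False] ell2_vanishes[OF f False]
            by (simp add: mult_op_def)
        next
          case v: True
          have l1: "(\<lambda>n. s n f v) \<longlonglongrightarrow> T f v" by (rule opnorm_tendsto_pointwise[OF sb T lim f])
          have l2: "(\<lambda>n. s n (basis v) v) \<longlonglongrightarrow> T (basis v) v" by (rule opnorm_tendsto_pointwise[OF sb T lim basis_ell2[OF v]])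
          have eq: "s n f v = s n (basis v) v * f v" for n
          proof -
            have "s n f v = mult_op L (diag_coeff (s n)) f v" using diag_ops_eq[OF s] by metis
            thus ?thesis using f by (simp add: mult_op_def diag_coeff_def)
          qed
          have l3: "(\<lambda>n. s n f v) \<longlonglongrightarrow> T (basis v) v * f v"
            unfolding eq by (intro tendsto_mult l2 tendsto_const)
          have "T f v = T (basis v) v * f v" using LIMSEQ_unique[OF l1 l3] .
          thus ?thesis using f by (simp add: mult_op_def diag_coeff_def)
        qed
      qed
    qed
  qed
  thus ?thesis using T by (simp add: diag_ops_def)
qed

definition words_of_len :: "nat \<Rightarrow> nat \<Rightarrow> (nat \<Rightarrow> nat) \<Rightarrow> word set" where
  "words_of_len d N m = {\<mu> \<in> words d N. tlen \<mu> = m}"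

lemma words_of_len_tlen: "x \<in> words_of_len d N m \<Longrightarrow> tlen x = m" by (simp add: words_of_len_def)

lemma finite_words_of_len: "finite (words_of_len d N m)"
proof -
  define S where "S i = {xs. set xs \<subseteq> {1..d} \<and> length xs = m i}" for i
  have fS: "finite (PiE {1..N} S)" by (rule finite_PiE) (auto simp: S_def finite_lists_length_eq)
  have sub: "(\<lambda>\<mu>. restrict \<mu> {1..N}) ` words_of_len d N m \<subseteq> PiE {1..N} S"
  proof (rule image_subsetI)
    fix x assume x: "x \<in> words_of_len d N m"
    have "x i \<in> S i" for i
    proof -
      have "length (x i) = m i" using fun_cong[OF words_of_len_tlen[OF x], of i] by (simp add: tlen_def)
      moreover have "set (x i) \<subseteq> {1..d}" using x by (simp add: words_of_len_def words_def)
      ultimately show ?thesis by (simp add: S_def)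
    qed
    thus "restrict x {1..N} \<in> PiE {1..N} S" by (simp add: restrict_PiE_iff)
  qed
  have inj: "inj_on (\<lambda>\<mu>. restrict \<mu> {1..N}) (words_of_len d N m)"
  proof (rule inj_onI)
    fix x y assume x: "x \<in> words_of_len d N m" and y: "y \<in> words_of_len d N m"
      and e: "restrict x {1..N} = restrict y {1..N}"
    show "x = y"
    proof
      fix i show "x i = y i"
      proof (cases "i \<in> {1..N}")
        case True thus ?thesis using e by (metis restrict_apply')
      next
        case False thus ?thesis using x y by (auto simp: words_of_len_def words_def)
      qed
    qed
  qed
  show ?thesis by (rule finite_imageD[OF finite_subset[OF sub fS] inj])
qed

lemma wtake_words_of_len:
  assumes "v \<in> words d N" "\<forall>i. m i \<le> length (v i)"
  shows "wtake m v \<in> words_of_len d N m"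
proof -
  have "set (take (m i) (v i)) \<subseteq> {1..d}" for i
    using assms(1) set_take_subset[of "m i" "v i"] by (auto simp: words_def)
  moreover have "i \<notin> {1..N} \<Longrightarrow> take (m i) (v i) = []" for i using assms(1) by (auto simp: words_def)
  moreover have "(\<lambda>i. length (take (m i) (v i))) = m" using assms(2) by (auto simp: fun_eq_iff min_def intro: antisym)
  ultimately show ?thesis unfolding words_of_len_def words_def tlen_def wtake_def by auto
qed

lemma factorial_language_words: "factorial_language d N L \<Longrightarrow> L \<subseteq> words d N"
  by (simp add: factorial_language_def)

section \<open>Weighted shifts\<close>

definition wshift_dom :: "word set \<Rightarrow> (nat \<Rightarrow> nat) \<Rightarrow> word \<Rightarrow> bool" where
  "wshift_dom L m v \<longleftrightarrow> v \<in> L \<and> (\<forall>i. m i \<le> length (v i)) \<and> wdrop m v \<in> L"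

definition wshift :: "word set \<Rightarrow> (nat \<Rightarrow> nat) \<Rightarrow> (word \<Rightarrow> complex) \<Rightarrow> op" where
  "wshift L m c = (\<lambda>f. if f \<in> ell2 L then (\<lambda>v. if wshift_dom L m v then c v * f (wdrop m v) else 0) else 0)"

definition wshift_coeff :: "word set \<Rightarrow> (nat \<Rightarrow> nat) \<Rightarrow> op \<Rightarrow> word \<Rightarrow> complex" where
  "wshift_coeff L m \<xi> v = \<xi> (basis (wdrop m v)) v"

definition coeff_after :: "word set \<Rightarrow> (word \<Rightarrow> complex) \<Rightarrow> word \<Rightarrow> word \<Rightarrow> complex" where
  "coeff_after L c \<kappa> = (\<lambda>w. if tcat \<kappa> w \<in> L then c (tcat \<kappa> w) else 0)"

lemma bounded_on_coeff_after: "bounded_on L c \<Longrightarrow> bounded_on L (coeff_after L c \<kappa>)"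
proof -
  assume "bounded_on L c"
  then obtain B where B: "\<forall>v\<in>L. cmod (c v) \<le> B" by (auto simp: bounded_on_def)
  have "\<forall>w\<in>L. cmod (coeff_after L c \<kappa> w) \<le> max B 0"
    using B by (auto simp: coeff_after_def intro: le_max_iff_disj[THEN iffD2])
  thus ?thesis by (auto simp: bounded_on_def)
qed

lemma shift_mult_op_apply:
  assumes \<kappa>: "tlen \<kappa> = m" and f: "f \<in> ell2 L" and c: "bounded_on L c'"
  shows "shift L \<kappa> (mult_op L c' f) v =
     (if wshift_dom L m v \<and> wtake m v = \<kappa> then c' (wdrop m v) * f (wdrop m v) else 0)"
proof -
  have f': "mult_op L c' f \<in> ell2 L"
    using c f unfolding bounded_on_def by (auto intro: mult_op_ell2)
  show ?thesis
  proof (cases "\<exists>w. v = tcat \<kappa> w")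
    case True
    then obtain w where v: "v = tcat \<kappa> w" by auto
    have sp: "(\<forall>i. m i \<le> length (v i)) \<and> wtake m v = \<kappa> \<and> wdrop m v = w"
      using tcat_eq_iff[OF \<kappa>] v by blast
    show ?thesis unfolding v shift_tcat[OF f'] using sp f
      by (auto simp: v wshift_dom_def mult_op_def)
  next
    case False
    have "\<not> (wshift_dom L m v \<and> wtake m v = \<kappa>)"
      using False tcat_eq_iff[OF \<kappa>, of v "wdrop m v"] by (auto simp: wshift_dom_def)
    moreover have "shift L \<kappa> (mult_op L c' f) v = 0" by (rule shift_outside_range) (use False in auto)
    ultimately show ?thesis by auto
  qed
qed

lemma shift_mult_op_coeff_after_apply:
  assumes \<kappa>: "tlen \<kappa> = m" and f: "f \<in> ell2 L" and c: "bounded_on L c"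
  shows "shift L \<kappa> (mult_op L (coeff_after L c \<kappa>) f) v =
     (if wshift_dom L m v \<and> wtake m v = \<kappa> then c v * f (wdrop m v) else 0)"
proof -
  have "wshift_dom L m v \<and> wtake m v = \<kappa> \<Longrightarrow> v = tcat \<kappa> (wdrop m v)"
    using tcat_eq_iff[OF \<kappa>, of v "wdrop m v"] by (auto simp: wshift_dom_def)
  thus ?thesis unfolding shift_mult_op_apply[OF \<kappa> f bounded_on_coeff_after[OF c]]
    by (auto simp: coeff_after_def wshift_dom_def)
qed

lemma wshift_eq_sum:
  assumes fl: "factorial_language d N L" and c: "bounded_on L c"
  shows "wshift L m c = (\<Sum>\<kappa>\<in>words_of_len d N m. shift L \<kappa> \<circ> mult_op L (coeff_after L c \<kappa>))"
proof
  fix f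
  show "wshift L m c f = (\<Sum>\<kappa>\<in>words_of_len d N m. shift L \<kappa> \<circ> mult_op L (coeff_after L c \<kappa>)) f"
  proof (cases "f \<in> ell2 L")
    case False
    have "shift L \<kappa> (mult_op L (coeff_after L c \<kappa>) f) = 0" for \<kappa>
      using False bounded_op_zero[OF shift_bounded] by (simp add: mult_op_def)
    thus ?thesis using False by (simp add: wshift_def sum_fun_apply)
  next
    case f: True
    show ?thesis
    proof
      fix v
      have "(\<Sum>\<kappa>\<in>words_of_len d N m. shift L \<kappa> \<circ> mult_op L (coeff_after L c \<kappa>)) f v =
          (\<Sum>\<kappa>\<in>words_of_len d N m. if wshift_dom L m v \<and> wtake m v = \<kappa> then c v * f (wdrop m v) else 0)"
        unfolding sum_fun_apply by (intro sum.cong refl) (simp add: shift_mult_op_coeff_after_apply[OF words_of_len_tlen f c])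
      also have "\<dots> = (if wshift_dom L m v then c v * f (wdrop m v) else 0)"
      proof (cases "wshift_dom L m v")
        case True
        hence "wtake m v \<in> words_of_len d N m" using factorial_language_words[OF fl] by (intro wtake_words_of_len) (auto simp: wshift_dom_def)
        have "(\<Sum>\<kappa>\<in>words_of_len d N m. if wshift_dom L m v \<and> wtake m v = \<kappa> then c v * f (wdrop m v) else 0)
            = (\<Sum>\<kappa>\<in>words_of_len d N m. if wtake m v = \<kappa> then c v * f (wdrop m v) else 0)"
          using True by simp
        also have "\<dots> = c v * f (wdrop m v)" by (subst sum.delta'[OF finite_words_of_len]) (use \<open>wtake m v \<in> words_of_len d N m\<close> in simp)
        finally show ?thesis using True by simp
      qed simp
      finally show "wshift L m c f v = (\<Sum>\<kappa>\<in>words_of_len d N m. shift L \<kappa> \<circ> mult_op L (coeff_after L c \<kappa>)) f v"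
        using f by (simp add: wshift_def)
    qed
  qed
qed

lemma wshift_bounded:
  assumes fl: "factorial_language d N L" and c: "bounded_on L c"
  shows "wshift L m c \<in> bounded_ops L"
proof -
  have "\<And>\<kappa>. \<kappa> \<in> words_of_len d N m \<Longrightarrow> shift L \<kappa> \<circ> mult_op L (coeff_after L c \<kappa>) \<in> bounded_ops L"
    by (rule bounded_ops_comp[OF shift_bounded mult_op_bounded[OF bounded_on_coeff_after[OF c]]])
  thus ?thesis unfolding wshift_eq_sum[OF fl c] by (rule bounded_ops_sum[OF finite_words_of_len])
qed

lemma is_adjoint_wshift:
  assumes fl: "factorial_language d N L" and c: "bounded_on L c"
  shows "is_adjoint L (wshift L m c) (\<Sum>\<kappa>\<in>words_of_len d N m. mult_op L (\<lambda>w. cnj (coeff_after L c \<kappa> w)) \<circ> shift_adj L \<kappa>)"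
proof -
  have "\<And>\<kappa>. \<kappa> \<in> words_of_len d N m \<Longrightarrow> shift L \<kappa> \<circ> mult_op L (coeff_after L c \<kappa>) \<in> bounded_ops L"
    by (rule bounded_ops_comp[OF shift_bounded mult_op_bounded[OF bounded_on_coeff_after[OF c]]])
  moreover have "\<And>\<kappa>. \<kappa> \<in> words_of_len d N m \<Longrightarrow> is_adjoint L (shift L \<kappa> \<circ> mult_op L (coeff_after L c \<kappa>))
      (mult_op L (\<lambda>w. cnj (coeff_after L c \<kappa> w)) \<circ> shift_adj L \<kappa>)"
    by (rule is_adjoint_comp[OF is_adjoint_shift is_adjoint_mult_op[OF bounded_on_coeff_after[OF c]] mult_op_bounded[OF bounded_on_coeff_after[OF c]]])
  ultimately show ?thesis unfolding wshift_eq_sum[OF fl c] by (intro is_adjoint_sum[OF finite_words_of_len])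
qed

lemma adjoint_wshift:
  assumes fl: "factorial_language d N L" and c: "bounded_on L c"
  shows "adjoint L (wshift L m c) \<in> bounded_ops L"
    "g \<in> ell2 L \<Longrightarrow> adjoint L (wshift L m c) g w =
      (\<Sum>\<kappa>\<in>words_of_len d N m. if w \<in> L \<and> tcat \<kappa> w \<in> L then cnj (c (tcat \<kappa> w)) * g (tcat \<kappa> w) else 0)"
proof -
  have e: "adjoint L (wshift L m c) = (\<Sum>\<kappa>\<in>words_of_len d N m. mult_op L (\<lambda>w. cnj (coeff_after L c \<kappa> w)) \<circ> shift_adj L \<kappa>)"
    by (rule adjoint_eqI[OF is_adjoint_wshift[OF fl c]])
  show "adjoint L (wshift L m c) \<in> bounded_ops L" using is_adjoint_bounded[OF is_adjoint_wshift[OF fl c]] e by simp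
  assume g: "g \<in> ell2 L"
  show "adjoint L (wshift L m c) g w =
      (\<Sum>\<kappa>\<in>words_of_len d N m. if w \<in> L \<and> tcat \<kappa> w \<in> L then cnj (c (tcat \<kappa> w)) * g (tcat \<kappa> w) else 0)"
    unfolding e sum_fun_apply
    by (intro sum.cong refl) (simp add: mult_op_def shift_adj_ell2[OF g] coeff_after_def, simp add: shift_adj_def g)
qed

definition wshift_ops :: "word set \<Rightarrow> (nat \<Rightarrow> nat) \<Rightarrow> op set" where
  "wshift_ops L m = {\<xi> \<in> bounded_ops L. \<xi> = wshift L m (wshift_coeff L m \<xi>)}"

lemma wshift_cong:
  assumes "\<And>v. wshift_dom L m v \<Longrightarrow> c v = c' v"
  shows "wshift L m c = wshift L m c'"
  using assms by (auto simp: wshift_def fun_eq_iff)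

lemma wshift_coeff_wshift: "wshift_dom L m v \<Longrightarrow> wshift_coeff L m (wshift L m c) v = c v"
  by (simp add: wshift_coeff_def wshift_def basis_ell2 wshift_dom_def) (simp add: basis_def)

lemma wshift_mem_wshift_ops:
  assumes fl: "factorial_language d N L" and c: "bounded_on L c"
  shows "wshift L m c \<in> wshift_ops L m"
  unfolding wshift_ops_def using wshift_bounded[OF fl c] by (auto intro: wshift_cong simp: wshift_coeff_wshift)

lemma wshift_coeff_bound:
  assumes a: "a \<in> bounded_ops L"
  shows "cmod (wshift_coeff L m a v) \<le> opnorm L a"
proof (cases "wdrop m v \<in> L")
  case True thus ?thesis unfolding wshift_coeff_def by (rule opnorm_bound_basis[OF a])
next
  case False thus ?thesis using opnorm_nonneg[OF a] bounded_op_outside[OF a basis_not_ell2[OF False]] by (simp add: wshift_coeff_def)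
qed

lemma bounded_on_wshift_coeff: "a \<in> bounded_ops L \<Longrightarrow> bounded_on L (wshift_coeff L m a)"
  unfolding bounded_on_def using wshift_coeff_bound by blast

lemma wshift_coeff_add: "wshift_coeff L m (a + b) v = wshift_coeff L m a v + wshift_coeff L m b v" by (simp add: wshift_coeff_def)
lemma wshift_coeff_diff: "wshift_coeff L m (a - b) v = wshift_coeff L m a v - wshift_coeff L m b v" by (simp add: wshift_coeff_def)
lemma wshift_coeff_opscale: "wshift_coeff L m (opscale k a) v = k * wshift_coeff L m a v" by (simp add: wshift_coeff_def opscale_def)

lemma wshift_ops_bounded: "a \<in> wshift_ops L m \<Longrightarrow> a \<in> bounded_ops L" by (simp add: wshift_ops_def)
lemma wshift_ops_eq: "a \<in> wshift_ops L m \<Longrightarrow> a = wshift L m (wshift_coeff L m a)" by (simp add: wshift_ops_def)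

lemma wshift_add: "wshift L m c + wshift L m c' = wshift L m (\<lambda>v. c v + c' v)"
  by (auto simp: wshift_def fun_eq_iff algebra_simps)

lemma opscale_wshift: "opscale k (wshift L m c) = wshift L m (\<lambda>v. k * c v)"
  by (auto simp: wshift_def opscale_def fun_eq_iff algebra_simps)

lemma wshift_ops_add: "a \<in> wshift_ops L m \<Longrightarrow> b \<in> wshift_ops L m \<Longrightarrow> a + b \<in> wshift_ops L m"
proof -
  assume a: "a \<in> wshift_ops L m" and b: "b \<in> wshift_ops L m"
  have "a + b = wshift L m (wshift_coeff L m a) + wshift L m (wshift_coeff L m b)" using wshift_ops_eq[OF a] wshift_ops_eq[OF b] by simp
  also have "\<dots> = wshift L m (wshift_coeff L m (a + b))" unfolding wshift_add by (rule wshift_cong) (simp add: wshift_coeff_add)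
  finally show ?thesis unfolding wshift_ops_def using bounded_ops_add[OF wshift_ops_bounded[OF a] wshift_ops_bounded[OF b]] by simp
qed

lemma wshift_ops_opscale: "a \<in> wshift_ops L m \<Longrightarrow> opscale k a \<in> wshift_ops L m"
proof -
  assume a: "a \<in> wshift_ops L m"
  have "opscale k a = opscale k (wshift L m (wshift_coeff L m a))" using wshift_ops_eq[OF a] by simp
  also have "\<dots> = wshift L m (wshift_coeff L m (opscale k a))" unfolding opscale_wshift by (rule wshift_cong) (simp add: wshift_coeff_opscale)
  finally show ?thesis unfolding wshift_ops_def using bounded_ops_opscale[OF wshift_ops_bounded[OF a]] by simp
qed

lemma wshift_ops_zero: "(0::op) \<in> wshift_ops L m"
proof -
  have "wshift L m (\<lambda>v. 0) = 0" by (auto simp: wshift_def fun_eq_iff)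
  moreover have "wshift L m (wshift_coeff L m (0::op)) = wshift L m (\<lambda>v. 0)" by (rule wshift_cong) (simp add: wshift_coeff_def)
  ultimately show ?thesis unfolding wshift_ops_def using bounded_ops_zero by simp
qed

lemma wshift_ops_limit:
  assumes s: "\<And>n. s n \<in> wshift_ops L m" and T: "T \<in> bounded_ops L"
    and lim: "(\<lambda>n. opnorm L (s n - T)) \<longlonglongrightarrow> 0"
  shows "T \<in> wshift_ops L m"
proof -
  have sb: "\<And>n. s n \<in> bounded_ops L" using s wshift_ops_bounded by blast
  have "T = wshift L m (wshift_coeff L m T)"
  proof
    fix f show "T f = wshift L m (wshift_coeff L m T) f"
    proof (cases "f \<in> ell2 L")
      case False thus ?thesis by (simp add: bounded_op_outside[OF T] wshift_def)
    next
      case f: True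
      show ?thesis
      proof
        fix v
        have l1: "(\<lambda>n. s n f v) \<longlonglongrightarrow> T f v" by (rule opnorm_tendsto_pointwise[OF sb T lim f])
        have eq: "s n f v = (if wshift_dom L m v then wshift_coeff L m (s n) v * f (wdrop m v) else 0)" for n
        proof -
          have "s n f v = wshift L m (wshift_coeff L m (s n)) f v" using wshift_ops_eq[OF s] by metis
          thus ?thesis using f by (simp add: wshift_def)
        qed
        show "T f v = wshift L m (wshift_coeff L m T) f v"
        proof (cases "wshift_dom L m v")
          case False
          have "(\<lambda>n. s n f v) \<longlonglongrightarrow> 0" unfolding eq using False by simp
          thus ?thesis using LIMSEQ_unique[OF l1] False f by (simp add: wshift_def)
        next
          case True
          have dl: "wdrop m v \<in> L" using True by (simp add: wshift_dom_def)
          have l2: "(\<lambda>n. wshift_coeff L m (s n) v) \<longlonglongrightarrow> wshift_coeff L m T v"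
            unfolding wshift_coeff_def by (rule opnorm_tendsto_pointwise[OF sb T lim basis_ell2[OF dl]])
          have l3: "(\<lambda>n. s n f v) \<longlonglongrightarrow> wshift_coeff L m T v * f (wdrop m v)"
            unfolding eq using True by (simp, intro tendsto_mult l2 tendsto_const)
          thus ?thesis using LIMSEQ_unique[OF l1 l3] True f by (simp add: wshift_def)
        qed
      qed
    qed
  qed
  thus ?thesis using T by (simp add: wshift_ops_def)
qed

lemma wshift_ops_bounded_on: "a \<in> wshift_ops L m \<Longrightarrow> bounded_on L (wshift_coeff L m a)" by (simp add: bounded_on_wshift_coeff wshift_ops_bounded)

lemma shift_comp_diag_op:
  assumes fl: "factorial_language d N L" and \<mu>: "tlen \<mu> = m" and b: "b \<in> diag_ops L"
  shows "shift L \<mu> \<circ> b = wshift L m (\<lambda>v. if wtake m v = \<mu> then diag_coeff b (wdrop m v) else 0)"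
    "shift L \<mu> \<circ> b \<in> wshift_ops L m"
proof -
  have bb: "bounded_on L (diag_coeff b)" by (rule diag_ops_bounded_on[OF b])
  have "shift L \<mu> \<circ> mult_op L (diag_coeff b) = wshift L m (\<lambda>v. if wtake m v = \<mu> then diag_coeff b (wdrop m v) else 0)"
  proof
    fix f show "(shift L \<mu> \<circ> mult_op L (diag_coeff b)) f = wshift L m (\<lambda>v. if wtake m v = \<mu> then diag_coeff b (wdrop m v) else 0) f"
    proof (cases "f \<in> ell2 L")
      case False thus ?thesis by (simp add: mult_op_def wshift_def bounded_op_zero[OF shift_bounded])
    next
      case f: True
      show ?thesis using f
        by (auto simp: fun_eq_iff shift_mult_op_apply[OF \<mu> f bb] wshift_def)
    qed
  qed
  thus e: "shift L \<mu> \<circ> b = wshift L m (\<lambda>v. if wtake m v = \<mu> then diag_coeff b (wdrop m v) else 0)"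
    using diag_ops_eq[OF b] by simp
  have "bounded_on L (\<lambda>v. if wtake m v = \<mu> then diag_coeff b (wdrop m v) else 0)"
    using diag_coeff_bound[OF diag_ops_bounded[OF b]] by (auto simp: bounded_on_def intro!: exI[of _ "opnorm L b"] opnorm_nonneg diag_ops_bounded b)
  thus "shift L \<mu> \<circ> b \<in> wshift_ops L m" unfolding e by (rule wshift_mem_wshift_ops[OF fl])
qed

definition cstar_closed :: "word set \<Rightarrow> op set \<Rightarrow> op set \<Rightarrow> bool" where
  "cstar_closed L G S \<longleftrightarrow> S \<subseteq> bounded_ops L \<and> G \<subseteq> S \<and> idop L \<in> S \<and>
     (\<forall>a\<in>S. \<forall>b\<in>S. a + b \<in> S \<and> a \<circ> b \<in> S) \<and>
     (\<forall>c. \<forall>a\<in>S. opscale c a \<in> S) \<and> (\<forall>a\<in>S. adjoint L a \<in> S) \<and> norm_closed L S"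

lemma unital_cstar_gen_minimal: "cstar_closed L G S \<Longrightarrow> unital_cstar_gen L G \<subseteq> S"
  unfolding unital_cstar_gen_def cstar_closed_def by blast

lemma unital_cstar_gen_gens: "G \<subseteq> unital_cstar_gen L G"
  unfolding unital_cstar_gen_def by blast

lemma unital_cstar_gen_idop: "idop L \<in> unital_cstar_gen L G"
  unfolding unital_cstar_gen_def by blast

lemma unital_cstar_gen_add:
  "a \<in> unital_cstar_gen L G \<Longrightarrow> b \<in> unital_cstar_gen L G \<Longrightarrow> a + b \<in> unital_cstar_gen L G"
  unfolding unital_cstar_gen_def by blast

lemma unital_cstar_gen_comp:
  "a \<in> unital_cstar_gen L G \<Longrightarrow> b \<in> unital_cstar_gen L G \<Longrightarrow> a \<circ> b \<in> unital_cstar_gen L G"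
  unfolding unital_cstar_gen_def by blast

lemma unital_cstar_gen_opscale: "a \<in> unital_cstar_gen L G \<Longrightarrow> opscale c a \<in> unital_cstar_gen L G"
  unfolding unital_cstar_gen_def by blast

lemma unital_cstar_gen_adjoint: "a \<in> unital_cstar_gen L G \<Longrightarrow> adjoint L a \<in> unital_cstar_gen L G"
  unfolding unital_cstar_gen_def by blast

lemma unital_cstar_gen_limit:
  assumes "\<And>n. s n \<in> unital_cstar_gen L G" "T \<in> bounded_ops L"
    "(\<lambda>n. opnorm L (s n - T)) \<longlonglongrightarrow> 0"
  shows "T \<in> unital_cstar_gen L G"
  using assms unfolding unital_cstar_gen_def norm_closed_def by blast

lemma opscale_zero: "opscale 0 a = 0"
  by (simp add: opscale_def fun_eq_iff)

lemma unital_cstar_gen_zero: "(0::op) \<in> unital_cstar_gen L G"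
  using unital_cstar_gen_opscale[OF unital_cstar_gen_idop, of 0 L G] by (simp add: opscale_zero)

lemma unital_cstar_gen_diff:
  assumes "a \<in> unital_cstar_gen L G" "b \<in> unital_cstar_gen L G"
  shows "a - b \<in> unital_cstar_gen L G"
proof -
  have "a + opscale (-1) b \<in> unital_cstar_gen L G"
    by (intro unital_cstar_gen_add unital_cstar_gen_opscale assms)
  thus ?thesis by (simp add: opscale_minus_one)
qed

definition span_closed :: "word set \<Rightarrow> op set \<Rightarrow> op set \<Rightarrow> bool" where
  "span_closed L G V \<longleftrightarrow> V \<subseteq> bounded_ops L \<and> G \<subseteq> V \<and> 0 \<in> V \<and>
     (\<forall>a\<in>V. \<forall>b\<in>V. a + b \<in> V) \<and> (\<forall>c. \<forall>a\<in>V. opscale c a \<in> V) \<and> norm_closed L V"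

lemma closed_span_minimal: "span_closed L G V \<Longrightarrow> closed_span L G \<subseteq> V"
  unfolding closed_span_def span_closed_def by blast

lemma closed_span_gens: "G \<subseteq> closed_span L G"
  unfolding closed_span_def by blast

section \<open>The algebra of checkers is diagonal\<close>

definition ext_ind :: "word set \<Rightarrow> word \<Rightarrow> word \<Rightarrow> complex" where
  "ext_ind L \<mu> = (\<lambda>w. if tcat \<mu> w \<in> L then 1 else 0)"

lemma bounded_on_ext_ind: "bounded_on L (ext_ind L \<mu>)"
  by (auto simp: bounded_on_def ext_ind_def intro!: exI[of _ 1])

lemma checker_gen_eq_mult_op: "adjoint L (shift L \<mu>) \<circ> shift L \<mu> = mult_op L (ext_ind L \<mu>)"
proof
  fix f
  show "(adjoint L (shift L \<mu>) \<circ> shift L \<mu>) f = mult_op L (ext_ind L \<mu>) f"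
  proof (cases "f \<in> ell2 L")
    case False thus ?thesis
      by (simp add: adjoint_eqI[OF is_adjoint_shift] mult_op_def bounded_op_outside[OF shift_bounded]
          bounded_op_zero[OF shift_adj_bounded])
  next
    case f: True
    show ?thesis
      using f shift_ell2(1)[OF f, of \<mu>] ell2_vanishes[OF f]
      by (auto simp: adjoint_eqI[OF is_adjoint_shift] mult_op_def shift_adj_def shift_tcat[OF f] ext_ind_def)
  qed
qed

abbreviation checker_gens :: "word set \<Rightarrow> op set" where
  "checker_gens L \<equiv> {adjoint L (shift L \<mu>) \<circ> shift L \<mu> | \<mu>. \<mu> \<in> L}"

lemma cstar_closed_diag_ops: "cstar_closed L (checker_gens L) (diag_ops L)"
  unfolding cstar_closed_def norm_closed_def
proof (intro conjI ballI allI impI)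
  show "diag_ops L \<subseteq> bounded_ops L" using diag_ops_bounded by blast
  show "checker_gens L \<subseteq> diag_ops L"
    using checker_gen_eq_mult_op mult_op_diag_ops[OF bounded_on_ext_ind] by auto
qed (auto intro: diag_ops_idop diag_ops_add diag_ops_comp diag_ops_opscale diag_ops_adjoint diag_ops_limit)

lemma checkers_diag_ops: "checkers L \<subseteq> diag_ops L"
  unfolding checkers_def by (rule unital_cstar_gen_minimal[OF cstar_closed_diag_ops])

lemma checkers_bounded: "a \<in> checkers L \<Longrightarrow> a \<in> bounded_ops L"
  using checkers_diag_ops diag_ops_bounded by blast

lemma checkers_add: "a \<in> checkers L \<Longrightarrow> b \<in> checkers L \<Longrightarrow> a + b \<in> checkers L"
  unfolding checkers_def by (rule unital_cstar_gen_add)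

lemma checkers_comp: "a \<in> checkers L \<Longrightarrow> b \<in> checkers L \<Longrightarrow> a \<circ> b \<in> checkers L"
  unfolding checkers_def by (rule unital_cstar_gen_comp)

lemma checkers_opscale: "a \<in> checkers L \<Longrightarrow> opscale c a \<in> checkers L"
  unfolding checkers_def by (rule unital_cstar_gen_opscale)

lemma checkers_adjoint: "a \<in> checkers L \<Longrightarrow> adjoint L a \<in> checkers L"
  unfolding checkers_def by (rule unital_cstar_gen_adjoint)

lemma checkers_zero: "(0::op) \<in> checkers L"
  unfolding checkers_def by (rule unital_cstar_gen_zero)

lemma checkers_idop: "idop L \<in> checkers L"
  unfolding checkers_def by (rule unital_cstar_gen_idop)

lemma checkers_diff: "a \<in> checkers L \<Longrightarrow> b \<in> checkers L \<Longrightarrow> a - b \<in> checkers L"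
  unfolding checkers_def by (rule unital_cstar_gen_diff)

lemma checkers_limit:
  "(\<And>n. s n \<in> checkers L) \<Longrightarrow> T \<in> bounded_ops L \<Longrightarrow>
    (\<lambda>n. opnorm L (s n - T)) \<longlonglongrightarrow> 0 \<Longrightarrow> T \<in> checkers L"
  unfolding checkers_def by (rule unital_cstar_gen_limit)

lemma mult_op_eq_0I: "(\<And>w. w \<in> L \<Longrightarrow> c w = 0) \<Longrightarrow> mult_op L c = 0"
  using mult_op_cong[of L c "\<lambda>w. 0"] mult_op_zero by simp

lemma mult_op_ext_ind_checkers:
  assumes fl: "factorial_language d N L"
  shows "mult_op L (ext_ind L \<nu>) \<in> checkers L"
proof (cases "\<nu> \<in> L")
  case True
  have "adjoint L (shift L \<nu>) \<circ> shift L \<nu> \<in> checkers L"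
    unfolding checkers_def using True by (intro subsetD[OF unital_cstar_gen_gens]) auto
  thus ?thesis by (simp add: checker_gen_eq_mult_op)
next
  case False
  have "mult_op L (ext_ind L \<nu>) = 0"
    using False factorial_language_tcatD(1)[OF fl, of \<nu>] by (intro mult_op_eq_0I) (auto simp: ext_ind_def)
  thus ?thesis using checkers_zero by simp
qed

lemma mult_op_tendsto:
  assumes le: "\<And>n w. w \<in> L \<Longrightarrow> cmod (c n w - c' w) \<le> e n" and e0: "\<And>n. e n \<ge> 0"
    and e: "e \<longlonglongrightarrow> 0"
  shows "(\<lambda>n. opnorm L (mult_op L (c n) - mult_op L c')) \<longlonglongrightarrow> 0"
proof (rule Lim_null_comparison[OF always_eventually[OF allI] e])
  fix n
  have b: "\<forall>w\<in>L. cmod (c n w - c' w) \<le> e n" using le by blast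
  have "opnorm L (mult_op L (\<lambda>w. c n w - c' w)) \<le> e n" by (rule opnorm_mult_op_le[OF b e0])
  moreover have "opnorm L (mult_op L (\<lambda>w. c n w - c' w)) \<ge> 0" by (rule opnorm_nonneg[OF mult_op_bounded_ops[OF b]])
  ultimately show "norm (opnorm L (mult_op L (c n) - mult_op L c')) \<le> e n" unfolding mult_op_diff by simp
qed

lemma checkers_mult_op_limit:
  assumes c: "\<And>n. mult_op L (c n) \<in> checkers L" and c': "bounded_on L c'"
    and le: "\<And>n w. cmod (c n w - c' w) \<le> e n" and e: "e \<longlonglongrightarrow> 0"
  shows "mult_op L c' \<in> checkers L"
proof (rule checkers_limit[OF c mult_op_bounded[OF c'] mult_op_tendsto[OF le _ e]])
  show "0 \<le> e n" for n using le[of n undefined] norm_ge_zero order_trans by blast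
qed

lemma diag_coeff_comp:
  assumes a: "a \<in> diag_ops L" and b: "b \<in> diag_ops L" and v: "v \<in> L"
  shows "diag_coeff (a \<circ> b) v = diag_coeff a v * diag_coeff b v"
proof -
  have "a \<circ> b = mult_op L (diag_coeff a) \<circ> mult_op L (diag_coeff b)"
    using diag_ops_eq[OF a] diag_ops_eq[OF b] by simp
  also have "\<dots> = mult_op L (\<lambda>v. diag_coeff a v * diag_coeff b v)"
    by (rule mult_op_comp[OF diag_ops_bounded_on[OF b]])
  finally show ?thesis using v by (simp add: diag_coeff_mult_op)
qed

lemma diag_coeff_adjoint: "a \<in> diag_ops L \<Longrightarrow> v \<in> L \<Longrightarrow> diag_coeff (adjoint L a) v = cnj (diag_coeff a v)"
  by (simp add: adjoint_diag_op diag_coeff_mult_op)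

lemma diag_coeff_idop: "v \<in> L \<Longrightarrow> diag_coeff (idop L) v = 1"
  by (simp add: idop_eq_mult_op diag_coeff_mult_op)

lemma diag_ops_comp_left: "a \<in> diag_ops L \<Longrightarrow> a \<circ> X = mult_op L (diag_coeff a) \<circ> X"
  by (metis diag_ops_eq)

lemma diag_ops_comp_eq_mult_op:
  "a \<in> diag_ops L \<Longrightarrow> b \<in> diag_ops L \<Longrightarrow> a \<circ> b = mult_op L (\<lambda>v. diag_coeff a v * diag_coeff b v)"
  by (metis diag_ops_eq mult_op_comp diag_ops_bounded_on)

text \<open>For diagonal \<open>a\<close>, \<open>compress L \<mu> a\<close> is the operator \<open>T\<^sub>\<mu>\<^sup>* a T\<^sub>\<mu>\<close>.\<close>

definition compress_coeff :: "word set \<Rightarrow> word \<Rightarrow> op \<Rightarrow> word \<Rightarrow> complex" where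
  "compress_coeff L \<mu> a w = (if tcat \<mu> w \<in> L then diag_coeff a (tcat \<mu> w) else 0)"

definition compress :: "word set \<Rightarrow> word \<Rightarrow> op \<Rightarrow> op" where
  "compress L \<mu> a = mult_op L (compress_coeff L \<mu> a)"

lemma compress_coeff_bound: "a \<in> bounded_ops L \<Longrightarrow> cmod (compress_coeff L \<mu> a w) \<le> opnorm L a"
  using diag_coeff_bound[of a L] opnorm_nonneg[of a L] by (simp add: compress_coeff_def)

lemma bounded_on_compress_coeff: "a \<in> bounded_ops L \<Longrightarrow> bounded_on L (compress_coeff L \<mu> a)"
  unfolding bounded_on_def using compress_coeff_bound by blast

lemma compress_diag_ops: "a \<in> bounded_ops L \<Longrightarrow> compress L \<mu> a \<in> diag_ops L"
  unfolding compress_def by (rule mult_op_diag_ops[OF bounded_on_compress_coeff])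

lemma compress_add: "compress L \<mu> (a + b) = compress L \<mu> a + compress L \<mu> b"
  unfolding compress_def mult_op_add by (rule mult_op_cong) (simp add: compress_coeff_def diag_coeff_add)

lemma compress_opscale: "compress L \<mu> (opscale c a) = opscale c (compress L \<mu> a)"
  unfolding compress_def opscale_mult_op by (rule mult_op_cong) (simp add: compress_coeff_def diag_coeff_opscale)

lemma compress_comp:
  assumes "a \<in> diag_ops L" "b \<in> diag_ops L"
  shows "compress L \<mu> (a \<circ> b) = compress L \<mu> a \<circ> compress L \<mu> b"
  unfolding compress_def mult_op_comp[OF bounded_on_compress_coeff[OF diag_ops_bounded[OF assms(2)]]]
  by (rule mult_op_cong) (simp add: compress_coeff_def diag_coeff_comp[OF assms])

lemma compress_adjoint:
  assumes a: "a \<in> diag_ops L"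
  shows "compress L \<mu> (adjoint L a) = adjoint L (compress L \<mu> a)"
proof -
  have "adjoint L (compress L \<mu> a) = mult_op L (\<lambda>v. cnj (diag_coeff (compress L \<mu> a) v))"
    by (rule adjoint_diag_op[OF compress_diag_ops[OF diag_ops_bounded[OF a]]])
  also have "\<dots> = compress L \<mu> (adjoint L a)"
    unfolding compress_def
    by (rule mult_op_cong) (simp add: compress_coeff_def diag_coeff_mult_op diag_coeff_adjoint[OF a])
  finally show ?thesis by simp
qed

lemma compress_ext_ind:
  assumes fl: "factorial_language d N L"
  shows "compress L \<mu> (mult_op L (ext_ind L \<nu>)) = mult_op L (ext_ind L (tcat \<nu> \<mu>))"
  unfolding compress_def
proof (rule mult_op_cong)
  fix w assume "w \<in> L"
  have "tcat (tcat \<nu> \<mu>) w \<in> L \<Longrightarrow> tcat \<mu> w \<in> L"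
    using factorial_language_tcatD(2)[OF fl, of \<nu> "tcat \<mu> w"] by (simp add: tcat_assoc)
  thus "compress_coeff L \<mu> (mult_op L (ext_ind L \<nu>)) w = ext_ind L (tcat \<nu> \<mu>) w"
    by (auto simp: compress_coeff_def diag_coeff_mult_op ext_ind_def tcat_assoc)
qed

lemma compress_idop: "compress L \<mu> (idop L) = mult_op L (ext_ind L \<mu>)"
  unfolding compress_def by (rule mult_op_cong) (simp add: compress_coeff_def diag_coeff_idop ext_ind_def)

lemma compress_coeff_diff_bound:
  assumes "a \<in> bounded_ops L" "b \<in> bounded_ops L"
  shows "cmod (compress_coeff L \<mu> a w - compress_coeff L \<mu> b w) \<le> opnorm L (a - b)"
  using compress_coeff_bound[OF bounded_ops_diff[OF assms], of \<mu> w]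
  by (simp add: compress_coeff_def diag_coeff_diff split: if_splits)

lemma compress_checkers:
  assumes fl: "factorial_language d N L" and a: "a \<in> checkers L"
  shows "compress L \<mu> a \<in> checkers L"
proof -
  define S where "S = {a \<in> diag_ops L. compress L \<mu> a \<in> checkers L}"
  have gens: "checker_gens L \<subseteq> S"
    using checker_gen_eq_mult_op mult_op_diag_ops[OF bounded_on_ext_ind]
      compress_ext_ind[OF fl] mult_op_ext_ind_checkers[OF fl] by (auto simp: S_def)
  have limit: "T \<in> S" if s: "\<And>n. s n \<in> S" and T: "T \<in> bounded_ops L"
    and lim: "(\<lambda>n. opnorm L (s n - T)) \<longlonglongrightarrow> 0" for s T
  proof -
    have sD: "s n \<in> diag_ops L" for n using s by (simp add: S_def)
    have "compress L \<mu> T \<in> checkers L"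
      unfolding compress_def
      by (rule checkers_mult_op_limit[OF _ bounded_on_compress_coeff[OF T] _ lim])
        (use s compress_coeff_diff_bound[OF diag_ops_bounded[OF sD] T] in \<open>auto simp: S_def compress_def\<close>)
    thus ?thesis using diag_ops_limit[OF sD T lim] by (simp add: S_def)
  qed
  have "cstar_closed L (checker_gens L) S"
    unfolding cstar_closed_def norm_closed_def
  proof (intro conjI ballI allI impI)
    show "S \<subseteq> bounded_ops L" using diag_ops_bounded by (auto simp: S_def)
    show "idop L \<in> S"
      using diag_ops_idop mult_op_ext_ind_checkers[OF fl] by (simp add: S_def compress_idop)
    fix a b assume "a \<in> S" "b \<in> S"
    thus "a + b \<in> S" "a \<circ> b \<in> S"
      by (auto simp: S_def compress_add compress_comp diag_ops_add diag_ops_comp checkers_add checkers_comp)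
  next
    fix c a assume "a \<in> S"
    thus "opscale c a \<in> S" "adjoint L a \<in> S"
      by (auto simp: S_def compress_opscale compress_adjoint diag_ops_opscale diag_ops_adjoint
          checkers_opscale checkers_adjoint)
  next
    show "checker_gens L \<subseteq> S" by (rule gens)
  next
    fix s T assume "(\<forall>n. s n \<in> S) \<and> T \<in> bounded_ops L \<and> (\<lambda>n. opnorm L (s n - T)) \<longlonglongrightarrow> 0"
    thus "T \<in> S" using limit by blast
  qed
  hence "checkers L \<subseteq> S" unfolding checkers_def by (rule unital_cstar_gen_minimal)
  thus ?thesis using a by (auto simp: S_def)
qed

lemma tcat_delta_iff: "(\<exists>w. v = tcat (delta i k) w) \<longleftrightarrow> (v i \<noteq> [] \<and> hd (v i) = k)"
proof
  assume "\<exists>w. v = tcat (delta i k) w"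
  then obtain w where "v = tcat (delta i k) w" by auto
  thus "v i \<noteq> [] \<and> hd (v i) = k" by (simp add: tcat_def delta_def)
next
  assume h: "v i \<noteq> [] \<and> hd (v i) = k"
  have "v = tcat (delta i k) (v(i := tl (v i)))"
    using h by (auto simp: tcat_def delta_def fun_eq_iff)
  thus "\<exists>w. v = tcat (delta i k) w" by blast
qed

lemma shift_comp_shift_adj_delta_apply:
  assumes fl: "factorial_language d N L" and g: "g \<in> ell2 L"
  shows "(shift L (delta i k) \<circ> shift_adj L (delta i k)) g v = (if v \<in> L \<and> v i \<noteq> [] \<and> hd (v i) = k then g v else 0)"
proof (cases "\<exists>w. v = tcat (delta i k) w")
  case True
  then obtain w where v: "v = tcat (delta i k) w" by auto
  have wL: "v \<in> L \<Longrightarrow> w \<in> L" using factorial_language_tcatD(2)[OF fl, of "delta i k" w] v by blast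
  have c: "v i \<noteq> [] \<and> hd (v i) = k" using True tcat_delta_iff by blast
  have "(shift L (delta i k) \<circ> shift_adj L (delta i k)) g v = shift L (delta i k) (shift_adj L (delta i k) g) (tcat (delta i k) w)"
    by (simp add: v)
  also have "\<dots> = (if tcat (delta i k) w \<in> L \<and> w \<in> L then shift_adj L (delta i k) g w else 0)"
    by (rule shift_tcat[OF shift_adj_ell2(1)[OF g]])
  also have "\<dots> = (if v \<in> L then g v else 0)"
    using wL by (auto simp: shift_adj_def g v)
  finally show ?thesis using c by simp
next
  case False
  thus ?thesis unfolding tcat_delta_iff[symmetric] using False by (simp add: shift_outside_range)
qed

lemma Pproj_eq_mult_op:
  assumes fl: "factorial_language d N L"
  shows "Pproj d L i = mult_op L (\<lambda>v. if v i \<noteq> [] then 1 else 0)"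
proof
  fix g
  show "Pproj d L i g = mult_op L (\<lambda>v. if v i \<noteq> [] then 1 else 0) g"
  proof (cases "g \<in> ell2 L")
    case False
    thus ?thesis
      by (simp add: Pproj_def adjoint_eqI[OF is_adjoint_shift] sum_fun_apply mult_op_def bounded_op_outside[OF shift_adj_bounded] bounded_op_zero[OF shift_bounded])
  next
    case g: True
    show ?thesis
    proof
      fix v
      have "Pproj d L i g v = (\<Sum>k\<in>{1..d}. if v \<in> L \<and> v i \<noteq> [] \<and> hd (v i) = k then g v else 0)"
        unfolding Pproj_def adjoint_eqI[OF is_adjoint_shift] sum_fun_apply
        by (intro sum.cong refl) (rule shift_comp_shift_adj_delta_apply[OF fl g])
      also have "\<dots> = (if v i \<noteq> [] then 1 else 0) * g v"
      proof (cases "v \<in> L \<and> v i \<noteq> []")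
        case True
        hence "v \<in> words d N" "hd (v i) \<in> set (v i)" using factorial_language_words[OF fl] by auto
        hence "hd (v i) \<in> {1..d}" unfolding words_def by blast
        thus ?thesis using True by (simp add: sum.delta'[where b="\<lambda>_. g v"] eq_commute[of "hd (v i)"])
      next
        case False thus ?thesis using ell2_vanishes[OF g] by auto
      qed
      finally show "Pproj d L i g v = mult_op L (\<lambda>v. if v i \<noteq> [] then 1 else 0) g v"
        using g by (simp add: mult_op_def)
    qed
  qed
qed

definition empty_ind :: "nat set \<Rightarrow> word \<Rightarrow> complex" where
  "empty_ind F = (\<lambda>v. if \<forall>i\<in>F. v i = [] then 1 else 0)"

lemma bounded_on_empty_ind: "bounded_on L (empty_ind F)"
  by (auto simp: bounded_on_def empty_ind_def intro!: exI[of _ 1])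

lemma foldr_QF_eq_mult_op:
  assumes fl: "factorial_language d N L"
  shows "foldr (\<lambda>i acc. (idop L - Pproj d L i) \<circ> acc) xs (idop L) = mult_op L (empty_ind (set xs))"
proof (induction xs)
  case Nil show ?case by (simp add: idop_eq_mult_op empty_ind_def)
next
  case (Cons i xs)
  have "foldr (\<lambda>i acc. (idop L - Pproj d L i) \<circ> acc) (i # xs) (idop L) =
      (idop L - Pproj d L i) \<circ> mult_op L (empty_ind (set xs))"
    by (simp only: foldr_Cons comp_apply Cons.IH)
  also have "\<dots> = mult_op L (\<lambda>v. (1 - (if v i \<noteq> [] then 1 else 0)) * empty_ind (set xs) v)"
    unfolding idop_eq_mult_op Pproj_eq_mult_op[OF fl] mult_op_diff by (rule mult_op_comp[OF bounded_on_empty_ind])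
  also have "\<dots> = mult_op L (empty_ind (set (i # xs)))"
    by (rule mult_op_cong) (auto simp: empty_ind_def)
  finally show ?case .
qed

lemma QF_eq_mult_op:
  assumes fl: "factorial_language d N L" and F: "finite F"
  shows "QF d L F = mult_op L (empty_ind F)"
  unfolding QF_def foldr_QF_eq_mult_op[OF fl] using F by simp

lemma comp_mult_op_empty_ind:
  "a \<in> diag_ops L \<Longrightarrow> a \<circ> mult_op L (empty_ind F) = mult_op L (\<lambda>v. diag_coeff a v * empty_ind F v)"
  unfolding diag_ops_comp_left[of a L] by (rule mult_op_comp[OF bounded_on_empty_ind])

lemma fixed_by_empty_ind_iff:
  assumes a: "a \<in> diag_ops L"
  shows "a = a \<circ> mult_op L (empty_ind F) \<longleftrightarrow> (\<forall>v\<in>L. (\<exists>i\<in>F. v i \<noteq> []) \<longrightarrow> diag_coeff a v = 0)"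
proof
  assume e: "a = a \<circ> mult_op L (empty_ind F)"
  show "\<forall>v\<in>L. (\<exists>i\<in>F. v i \<noteq> []) \<longrightarrow> diag_coeff a v = 0"
  proof (intro ballI impI)
    fix v assume "v \<in> L" "\<exists>i\<in>F. v i \<noteq> []"
    moreover have "diag_coeff a v = diag_coeff (mult_op L (\<lambda>v. diag_coeff a v * empty_ind F v)) v"
      using e comp_mult_op_empty_ind[OF a] by metis
    ultimately show "diag_coeff a v = 0" by (auto simp: diag_coeff_mult_op empty_ind_def split: if_splits)
  qed
next
  assume h: "\<forall>v\<in>L. (\<exists>i\<in>F. v i \<noteq> []) \<longrightarrow> diag_coeff a v = 0"
  have "mult_op L (diag_coeff a) = mult_op L (\<lambda>v. diag_coeff a v * empty_ind F v)"
    using h by (intro mult_op_cong) (auto simp: empty_ind_def)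
  thus "a = a \<circ> mult_op L (empty_ind F)" unfolding comp_mult_op_empty_ind[OF a] using diag_ops_eq[OF a] by simp
qed

lemma killed_by_empty_ind_iff:
  assumes a: "a \<in> diag_ops L"
  shows "a \<circ> mult_op L (empty_ind F) = 0 \<longleftrightarrow> (\<forall>v\<in>L. (\<forall>i\<in>F. v i = []) \<longrightarrow> diag_coeff a v = 0)"
proof
  assume "a \<circ> mult_op L (empty_ind F) = 0"
  hence z: "mult_op L (\<lambda>v. diag_coeff a v * empty_ind F v) = 0"
    by (simp add: comp_mult_op_empty_ind[OF a])
  show "\<forall>v\<in>L. (\<forall>i\<in>F. v i = []) \<longrightarrow> diag_coeff a v = 0"
  proof (intro ballI impI)
    fix v assume v: "v \<in> L" and e: "\<forall>i\<in>F. v i = []"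
    have "diag_coeff (mult_op L (\<lambda>v. diag_coeff a v * empty_ind F v)) v = 0"
      unfolding z by (simp add: diag_coeff_def)
    thus "diag_coeff a v = 0" using v e by (simp add: diag_coeff_mult_op empty_ind_def)
  qed
next
  assume "\<forall>v\<in>L. (\<forall>i\<in>F. v i = []) \<longrightarrow> diag_coeff a v = 0"
  thus "a \<circ> mult_op L (empty_ind F) = 0"
    unfolding comp_mult_op_empty_ind[OF a] by (intro mult_op_eq_0I) (simp add: empty_ind_def)
qed

abbreviation Xfib_gens :: "word set \<Rightarrow> (nat \<Rightarrow> nat) \<Rightarrow> op set" where
  "Xfib_gens L m \<equiv> {shift L \<mu> \<circ> a | \<mu> a. \<mu> \<in> L \<and> a \<in> checkers L \<and> tlen \<mu> = m}"

lemma Xfib_wshift_ops: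
  assumes fl: "factorial_language d N L"
  shows "Xfib L m \<subseteq> wshift_ops L m"
  unfolding Xfib_def
proof (rule closed_span_minimal)
  show "span_closed L (Xfib_gens L m) (wshift_ops L m)"
    unfolding span_closed_def norm_closed_def
  proof (intro conjI ballI allI impI)
    show "wshift_ops L m \<subseteq> bounded_ops L" using wshift_ops_bounded by blast
    show "Xfib_gens L m \<subseteq> wshift_ops L m" using shift_comp_diag_op(2)[OF fl] checkers_diag_ops by blast
    show "(0::op) \<in> wshift_ops L m" by (rule wshift_ops_zero)
  next
    fix a b assume "a \<in> wshift_ops L m" "b \<in> wshift_ops L m" thus "a + b \<in> wshift_ops L m" by (rule wshift_ops_add)
  next
    fix c a assume "a \<in> wshift_ops L m" thus "opscale c a \<in> wshift_ops L m" by (rule wshift_ops_opscale)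
  next
    fix s T assume "(\<forall>n. s n \<in> wshift_ops L m) \<and> T \<in> bounded_ops L \<and> (\<lambda>n. opnorm L (s n - T)) \<longlonglongrightarrow> 0"
    thus "T \<in> wshift_ops L m" using wshift_ops_limit by blast
  qed
qed

lemma Xfib_induct [consumes 2, case_names gen zero add scale limit]:
  assumes fl: "factorial_language d N L" and \<xi>: "\<xi> \<in> Xfib L m"
    and gen: "\<And>\<mu> b. \<mu> \<in> L \<Longrightarrow> tlen \<mu> = m \<Longrightarrow> b \<in> checkers L \<Longrightarrow> P (shift L \<mu> \<circ> b)"
    and zero: "P 0"
    and add: "\<And>x y. x \<in> wshift_ops L m \<Longrightarrow> y \<in> wshift_ops L m \<Longrightarrow> P x \<Longrightarrow> P y \<Longrightarrow> P (x + y)"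
    and scale: "\<And>c x. x \<in> wshift_ops L m \<Longrightarrow> P x \<Longrightarrow> P (opscale c x)"
    and limit: "\<And>s T. (\<And>n. s n \<in> wshift_ops L m) \<Longrightarrow> (\<And>n. P (s n)) \<Longrightarrow> T \<in> wshift_ops L m \<Longrightarrow>
      (\<lambda>n. opnorm L (s n - T)) \<longlonglongrightarrow> 0 \<Longrightarrow> P T"
  shows "P \<xi>"
proof -
  have "span_closed L (Xfib_gens L m) {x \<in> wshift_ops L m. P x}"
    unfolding span_closed_def norm_closed_def
  proof (intro conjI ballI allI impI)
    show "{x \<in> wshift_ops L m. P x} \<subseteq> bounded_ops L" using wshift_ops_bounded by blast
    show "Xfib_gens L m \<subseteq> {x \<in> wshift_ops L m. P x}"
      using shift_comp_diag_op(2)[OF fl] checkers_diag_ops gen by blast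
    show "0 \<in> {x \<in> wshift_ops L m. P x}" using wshift_ops_zero zero by simp
  next
    fix x y assume "x \<in> {x \<in> wshift_ops L m. P x}" "y \<in> {x \<in> wshift_ops L m. P x}"
    thus "x + y \<in> {x \<in> wshift_ops L m. P x}" using wshift_ops_add add by blast
  next
    fix c x assume "x \<in> {x \<in> wshift_ops L m. P x}"
    thus "opscale c x \<in> {x \<in> wshift_ops L m. P x}" using wshift_ops_opscale scale by blast
  next
    fix s T assume h: "(\<forall>n. s n \<in> {x \<in> wshift_ops L m. P x}) \<and> T \<in> bounded_ops L \<and>
      (\<lambda>n. opnorm L (s n - T)) \<longlonglongrightarrow> 0"
    hence "T \<in> wshift_ops L m" using wshift_ops_limit by blast
    thus "T \<in> {x \<in> wshift_ops L m. P x}" using h limit by blast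
  qed
  thus ?thesis using closed_span_minimal \<xi> unfolding Xfib_def by blast
qed

lemma tlen_delta: "tlen (delta i k) = unitvec i"
  by (simp add: tlen_def delta_def unitvec_def fun_eq_iff)

lemma shift_delta_Xfib:
  "delta i k \<in> L \<Longrightarrow> shift L (delta i k) \<circ> idop L \<in> Xfib L (unitvec i)"
  unfolding Xfib_def using checkers_idop tlen_delta by (blast intro: subsetD[OF closed_span_gens])

text \<open>The diagonal of \<open>\<xi>\<^sup>* a \<eta>\<close> for weighted shifts \<open>\<xi>, \<eta>\<close> of degree \<open>m\<close> and diagonal \<open>a\<close>
  (see \<open>sandwich_eq_mult_op\<close>).\<close>

definition sandwich_coeff :: "word set \<Rightarrow> nat \<Rightarrow> nat \<Rightarrow> (nat \<Rightarrow> nat) \<Rightarrow> op \<Rightarrow> op \<Rightarrow> op \<Rightarrow> word \<Rightarrow> complex" where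
  "sandwich_coeff L d N m \<xi> a \<eta> w = (\<Sum>\<kappa>\<in>words_of_len d N m. if tcat \<kappa> w \<in> L then
      cnj (wshift_coeff L m \<xi> (tcat \<kappa> w)) * diag_coeff a (tcat \<kappa> w) * wshift_coeff L m \<eta> (tcat \<kappa> w) else 0)"

lemma adjoint_wshift_ops:
  assumes fl: "factorial_language d N L" and xi: "\<xi> \<in> wshift_ops L m"
  shows "adjoint L \<xi> \<in> bounded_ops L"
    "g \<in> ell2 L \<Longrightarrow> adjoint L \<xi> g w =
      (\<Sum>\<kappa>\<in>words_of_len d N m. if w \<in> L \<and> tcat \<kappa> w \<in> L then cnj (wshift_coeff L m \<xi> (tcat \<kappa> w)) * g (tcat \<kappa> w) else 0)"
proof -
  have e: "adjoint L \<xi> = adjoint L (wshift L m (wshift_coeff L m \<xi>))" using wshift_ops_eq[OF xi] by simp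
  show "adjoint L \<xi> \<in> bounded_ops L" unfolding e by (rule adjoint_wshift(1)[OF fl wshift_ops_bounded_on[OF xi]])
  show "g \<in> ell2 L \<Longrightarrow> adjoint L \<xi> g w =
      (\<Sum>\<kappa>\<in>words_of_len d N m. if w \<in> L \<and> tcat \<kappa> w \<in> L then cnj (wshift_coeff L m \<xi> (tcat \<kappa> w)) * g (tcat \<kappa> w) else 0)"
    unfolding e by (rule adjoint_wshift(2)[OF fl wshift_ops_bounded_on[OF xi]])
qed

lemma wshift_ops_apply_tcat:
  assumes eta: "\<eta> \<in> wshift_ops L m" and f: "f \<in> ell2 L" and k: "\<kappa> \<in> words_of_len d N m"
    and w: "w \<in> L" and kw: "tcat \<kappa> w \<in> L"
  shows "\<eta> f (tcat \<kappa> w) = wshift_coeff L m \<eta> (tcat \<kappa> w) * f w"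
proof -
  have t: "tlen \<kappa> = m" using k by (simp add: words_of_len_def)
  have wshift_dom: "wshift_dom L m (tcat \<kappa> w)" "wdrop m (tcat \<kappa> w) = w"
    using w kw wdrop_wtake_tcat[of \<kappa> w] tlen_le_length_tcat[of \<kappa> _ w] t by (auto simp: wshift_dom_def)
  have "\<eta> f (tcat \<kappa> w) = wshift L m (wshift_coeff L m \<eta>) f (tcat \<kappa> w)" using wshift_ops_eq[OF eta] by metis
  thus ?thesis using wshift_dom f by (simp add: wshift_def)
qed

lemma sandwich_eq_mult_op:
  assumes fl: "factorial_language d N L" and xi: "\<xi> \<in> wshift_ops L m" and eta: "\<eta> \<in> wshift_ops L m"
    and a: "a \<in> diag_ops L"
  shows "adjoint L \<xi> \<circ> a \<circ> \<eta> = mult_op L (sandwich_coeff L d N m \<xi> a \<eta>)"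
proof
  fix f
  have ab: "a \<in> bounded_ops L" by (rule diag_ops_bounded[OF a])
  have eb: "\<eta> \<in> bounded_ops L" by (rule wshift_ops_bounded[OF eta])
  show "(adjoint L \<xi> \<circ> a \<circ> \<eta>) f = mult_op L (sandwich_coeff L d N m \<xi> a \<eta>) f"
  proof (cases "f \<in> ell2 L")
    case False thus ?thesis by (simp add: mult_op_def bounded_op_outside[OF eb] bounded_op_zero[OF ab] bounded_op_zero[OF adjoint_wshift_ops(1)[OF fl xi]])
  next
    case f: True
    have g: "a (\<eta> f) \<in> ell2 L" by (rule bounded_op_ell2[OF ab bounded_op_ell2[OF eb f]])
    have ae: "a (\<eta> f) v = diag_coeff a v * \<eta> f v" for v
    proof -
      have "a (\<eta> f) v = mult_op L (diag_coeff a) (\<eta> f) v" using diag_ops_eq[OF a] by metis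
      thus ?thesis using bounded_op_ell2[OF eb f] by (simp add: mult_op_def)
    qed
    show ?thesis
    proof
      fix w
      have "(adjoint L \<xi> \<circ> a \<circ> \<eta>) f w =
          (\<Sum>\<kappa>\<in>words_of_len d N m. if w \<in> L \<and> tcat \<kappa> w \<in> L then cnj (wshift_coeff L m \<xi> (tcat \<kappa> w)) * a (\<eta> f) (tcat \<kappa> w) else 0)"
        using adjoint_wshift_ops(2)[OF fl xi g] by simp
      also have "\<dots> = (\<Sum>\<kappa>\<in>words_of_len d N m. (if tcat \<kappa> w \<in> L then
          cnj (wshift_coeff L m \<xi> (tcat \<kappa> w)) * diag_coeff a (tcat \<kappa> w) * wshift_coeff L m \<eta> (tcat \<kappa> w) else 0) * f w)"
      proof (rule sum.cong[OF refl])
        fix \<kappa> assume k: "\<kappa> \<in> words_of_len d N m"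
        show "(if w \<in> L \<and> tcat \<kappa> w \<in> L then cnj (wshift_coeff L m \<xi> (tcat \<kappa> w)) * a (\<eta> f) (tcat \<kappa> w) else 0) =
          (if tcat \<kappa> w \<in> L then cnj (wshift_coeff L m \<xi> (tcat \<kappa> w)) * diag_coeff a (tcat \<kappa> w) * wshift_coeff L m \<eta> (tcat \<kappa> w) else 0) * f w"
          using wshift_ops_apply_tcat[OF eta f k] ell2_vanishes[OF f, of w] by (auto simp: ae)
      qed
      also have "\<dots> = mult_op L (sandwich_coeff L d N m \<xi> a \<eta>) f w"
        using f by (simp add: mult_op_def sandwich_coeff_def sum_distrib_right)
      finally show "(adjoint L \<xi> \<circ> a \<circ> \<eta>) f w = mult_op L (sandwich_coeff L d N m \<xi> a \<eta>) f w" .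
    qed
  qed
qed

lemma sandwich_coeff_bound:
  assumes xi: "\<xi> \<in> bounded_ops L" and a: "a \<in> bounded_ops L" and eta: "\<eta> \<in> bounded_ops L"
  shows "cmod (sandwich_coeff L d N m \<xi> a \<eta> w) \<le> real (card (words_of_len d N m)) * (opnorm L \<xi> * opnorm L a * opnorm L \<eta>)"
proof -
  have t: "cmod (if tcat \<kappa> w \<in> L then cnj (wshift_coeff L m \<xi> (tcat \<kappa> w)) * diag_coeff a (tcat \<kappa> w) * wshift_coeff L m \<eta> (tcat \<kappa> w) else 0)
      \<le> opnorm L \<xi> * opnorm L a * opnorm L \<eta>" for \<kappa>
  proof -
    have "cmod (cnj (wshift_coeff L m \<xi> (tcat \<kappa> w)) * diag_coeff a (tcat \<kappa> w) * wshift_coeff L m \<eta> (tcat \<kappa> w))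
        \<le> opnorm L \<xi> * opnorm L a * opnorm L \<eta>"
      unfolding norm_mult complex_mod_cnj
      by (intro mult_mono wshift_coeff_bound diag_coeff_bound xi a eta opnorm_nonneg mult_nonneg_nonneg norm_ge_zero)
    moreover have "0 \<le> opnorm L \<xi> * opnorm L a * opnorm L \<eta>"
      by (intro mult_nonneg_nonneg opnorm_nonneg xi a eta)
    ultimately show ?thesis by auto
  qed
  have "cmod (sandwich_coeff L d N m \<xi> a \<eta> w) \<le> (\<Sum>\<kappa>\<in>words_of_len d N m. opnorm L \<xi> * opnorm L a * opnorm L \<eta>)"
    unfolding sandwich_coeff_def by (rule sum_norm_le) (rule t)
  thus ?thesis by simp
qed

lemma sandwich_coeff_diff_right: "sandwich_coeff L d N m \<xi> a \<eta> w - sandwich_coeff L d N m \<xi> a \<eta>' w = sandwich_coeff L d N m \<xi> a (\<eta> - \<eta>') w"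
  unfolding sandwich_coeff_def by (simp add: sum_subtractf[symmetric] wshift_coeff_diff algebra_simps if_distrib cong: if_cong)

lemma sandwich_coeff_diff_left: "sandwich_coeff L d N m \<xi> a \<eta> w - sandwich_coeff L d N m \<xi>' a \<eta> w = sandwich_coeff L d N m (\<xi> - \<xi>') a \<eta> w"
  unfolding sandwich_coeff_def by (simp add: sum_subtractf[symmetric] wshift_coeff_diff algebra_simps if_distrib cong: if_cong)

lemma sandwich_coeff_add_right: "sandwich_coeff L d N m \<xi> a (\<eta> + \<eta>') w = sandwich_coeff L d N m \<xi> a \<eta> w + sandwich_coeff L d N m \<xi> a \<eta>' w"
  unfolding sandwich_coeff_def by (simp add: sum.distrib[symmetric] wshift_coeff_add algebra_simps if_distrib cong: if_cong)

lemma sandwich_coeff_add_left: "sandwich_coeff L d N m (\<xi> + \<xi>') a \<eta> w = sandwich_coeff L d N m \<xi> a \<eta> w + sandwich_coeff L d N m \<xi>' a \<eta> w"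
  unfolding sandwich_coeff_def by (simp add: sum.distrib[symmetric] wshift_coeff_add algebra_simps if_distrib cong: if_cong)

lemma sandwich_coeff_scale_right: "sandwich_coeff L d N m \<xi> a (opscale c \<eta>) w = c * sandwich_coeff L d N m \<xi> a \<eta> w"
  unfolding sandwich_coeff_def by (simp add: sum_distrib_left wshift_coeff_opscale algebra_simps if_distrib cong: if_cong)

lemma sandwich_coeff_scale_left: "sandwich_coeff L d N m (opscale c \<xi>) a \<eta> w = cnj c * sandwich_coeff L d N m \<xi> a \<eta> w"
  unfolding sandwich_coeff_def by (simp add: sum_distrib_left wshift_coeff_opscale algebra_simps if_distrib cong: if_cong)

lemma sandwich_coeff_zero_left: "sandwich_coeff L d N m 0 a \<eta> w = 0"
  using sandwich_coeff_scale_left[of L d N m 0 0 a \<eta> w] by (simp add: opscale_zero)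

lemma sandwich_coeff_zero_right: "sandwich_coeff L d N m \<xi> a 0 w = 0"
  using sandwich_coeff_scale_right[of L d N m \<xi> a 0 0 w] by (simp add: opscale_zero)

lemma bounded_on_sandwich_coeff:
  "\<xi> \<in> bounded_ops L \<Longrightarrow> a \<in> bounded_ops L \<Longrightarrow> \<eta> \<in> bounded_ops L \<Longrightarrow>
    bounded_on L (sandwich_coeff L d N m \<xi> a \<eta>)"
  unfolding bounded_on_def using sandwich_coeff_bound by blast

lemma sandwich_limit_left:
  assumes s: "\<And>n. mult_op L (sandwich_coeff L d N m (s n) a \<eta>) \<in> checkers L"
    and sb: "\<And>n. s n \<in> bounded_ops L" and T: "T \<in> bounded_ops L"
    and a: "a \<in> bounded_ops L" and \<eta>: "\<eta> \<in> bounded_ops L"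
    and lim: "(\<lambda>n. opnorm L (s n - T)) \<longlonglongrightarrow> 0"
  shows "mult_op L (sandwich_coeff L d N m T a \<eta>) \<in> checkers L"
proof (rule checkers_mult_op_limit[OF s bounded_on_sandwich_coeff[OF T a \<eta>]])
  let ?K = "real (card (words_of_len d N m)) * (opnorm L a * opnorm L \<eta>)"
  show "cmod (sandwich_coeff L d N m (s n) a \<eta> w - sandwich_coeff L d N m T a \<eta> w) \<le> ?K * opnorm L (s n - T)" for n w
    using sandwich_coeff_bound[OF bounded_ops_diff[OF sb T] a \<eta>, where d=d and N=N and m=m and w=w]
    by (simp add: sandwich_coeff_diff_left algebra_simps)
  show "(\<lambda>n. ?K * opnorm L (s n - T)) \<longlonglongrightarrow> 0" using tendsto_mult_right_zero[OF lim] .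
qed

lemma sandwich_limit_right:
  assumes s: "\<And>n. mult_op L (sandwich_coeff L d N m \<xi> a (s n)) \<in> checkers L"
    and sb: "\<And>n. s n \<in> bounded_ops L" and T: "T \<in> bounded_ops L"
    and a: "a \<in> bounded_ops L" and \<xi>: "\<xi> \<in> bounded_ops L"
    and lim: "(\<lambda>n. opnorm L (s n - T)) \<longlonglongrightarrow> 0"
  shows "mult_op L (sandwich_coeff L d N m \<xi> a T) \<in> checkers L"
proof (rule checkers_mult_op_limit[OF s bounded_on_sandwich_coeff[OF \<xi> a T]])
  let ?K = "real (card (words_of_len d N m)) * (opnorm L \<xi> * opnorm L a)"
  show "cmod (sandwich_coeff L d N m \<xi> a (s n) w - sandwich_coeff L d N m \<xi> a T w) \<le> ?K * opnorm L (s n - T)" for n w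
    using sandwich_coeff_bound[OF \<xi> a bounded_ops_diff[OF sb T], where d=d and N=N and m=m and w=w]
    by (simp add: sandwich_coeff_diff_right algebra_simps)
  show "(\<lambda>n. ?K * opnorm L (s n - T)) \<longlonglongrightarrow> 0" using tendsto_mult_right_zero[OF lim] .
qed

lemma wshift_coeff_shift_comp:
  assumes fl: "factorial_language d N L" and mu: "\<mu> \<in> L" "tlen \<mu> = m" and b: "b \<in> checkers L"
    and k: "\<kappa> \<in> words_of_len d N m" and w: "w \<in> L" and kw: "tcat \<kappa> w \<in> L"
  shows "wshift_coeff L m (shift L \<mu> \<circ> b) (tcat \<kappa> w) = (if \<kappa> = \<mu> then diag_coeff b w else 0)"
proof -
  have t: "tlen \<kappa> = m" using k by (simp add: words_of_len_def)
  have wshift_dom: "wshift_dom L m (tcat \<kappa> w)" using w kw wdrop_wtake_tcat[of \<kappa> w] tlen_le_length_tcat[of \<kappa> _ w] t by (auto simp: wshift_dom_def)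
  show ?thesis unfolding shift_comp_diag_op(1)[OF fl mu(2) subsetD[OF checkers_diag_ops b]] wshift_coeff_wshift[OF wshift_dom]
    using wdrop_wtake_tcat[of \<kappa> w] t by (cases "\<kappa> = \<mu>") auto
qed

lemma sandwich_coeff_gens:
  assumes fl: "factorial_language d N L"
    and \<mu>: "\<mu> \<in> L" "tlen \<mu> = m" and b: "b \<in> checkers L"
    and \<nu>: "\<nu> \<in> L" "tlen \<nu> = m" and b': "b' \<in> checkers L" and w: "w \<in> L"
  shows "sandwich_coeff L d N m (shift L \<mu> \<circ> b) a (shift L \<nu> \<circ> b') w =
    (if \<mu> = \<nu> then cnj (diag_coeff b w) * compress_coeff L \<mu> a w * diag_coeff b' w else 0)"
proof -
  have \<mu>_words: "\<mu> \<in> words_of_len d N m"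
    using \<mu> factorial_language_words[OF fl] by (auto simp: words_of_len_def)
  have "sandwich_coeff L d N m (shift L \<mu> \<circ> b) a (shift L \<nu> \<circ> b') w =
      (\<Sum>\<kappa>\<in>words_of_len d N m. if \<kappa> = \<mu> then
        (if \<mu> = \<nu> then cnj (diag_coeff b w) * compress_coeff L \<mu> a w * diag_coeff b' w else 0) else 0)"
    unfolding sandwich_coeff_def
    by (rule sum.cong[OF refl])
      (use wshift_coeff_shift_comp[OF fl \<mu> b _ w] wshift_coeff_shift_comp[OF fl \<nu> b' _ w]
        in \<open>auto simp: compress_coeff_def\<close>)
  also have "\<dots> = (if \<mu> = \<nu> then cnj (diag_coeff b w) * compress_coeff L \<mu> a w * diag_coeff b' w else 0)"
    by (simp add: sum.delta[OF finite_words_of_len] \<mu>_words)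
  finally show ?thesis .
qed

lemma sandwich_gens_checkers:
  assumes fl: "factorial_language d N L" and a: "a \<in> checkers L"
    and \<mu>: "\<mu> \<in> L" "tlen \<mu> = m" and b: "b \<in> checkers L"
    and \<nu>: "\<nu> \<in> L" "tlen \<nu> = m" and b': "b' \<in> checkers L"
  shows "mult_op L (sandwich_coeff L d N m (shift L \<mu> \<circ> b) a (shift L \<nu> \<circ> b')) \<in> checkers L"
proof (cases "\<mu> = \<nu>")
  case False
  hence "mult_op L (sandwich_coeff L d N m (shift L \<mu> \<circ> b) a (shift L \<nu> \<circ> b')) = 0"
    by (intro mult_op_eq_0I) (simp add: sandwich_coeff_gens[OF fl \<mu> b \<nu> b'])
  thus ?thesis using checkers_zero by simp
next
  case True
  have bD: "b \<in> diag_ops L" and b'D: "b' \<in> diag_ops L" using b b' checkers_diag_ops by auto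
  have ab: "a \<in> bounded_ops L" by (rule checkers_bounded[OF a])
  have "adjoint L b \<circ> compress L \<mu> a \<circ> b' =
      mult_op L (\<lambda>v. cnj (diag_coeff b v)) \<circ> mult_op L (compress_coeff L \<mu> a) \<circ> mult_op L (diag_coeff b')"
    unfolding adjoint_diag_op[OF bD] compress_def using diag_ops_eq[OF b'D] by simp
  also have "\<dots> = mult_op L (\<lambda>v. cnj (diag_coeff b v) * compress_coeff L \<mu> a v * diag_coeff b' v)"
    unfolding mult_op_comp[OF bounded_on_compress_coeff[OF ab]] mult_op_comp[OF diag_ops_bounded_on[OF b'D]]
    by simp
  also have "\<dots> = mult_op L (sandwich_coeff L d N m (shift L \<mu> \<circ> b) a (shift L \<nu> \<circ> b'))"
    by (rule mult_op_cong) (use sandwich_coeff_gens[OF fl \<mu> b \<nu> b'] True in simp)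
  finally show ?thesis
    using checkers_comp checkers_adjoint b b' compress_checkers[OF fl a] by metis
qed

lemma sandwich_gen_right_checkers:
  assumes fl: "factorial_language d N L" and a: "a \<in> checkers L"
    and \<nu>: "\<nu> \<in> L" "tlen \<nu> = m" and b': "b' \<in> checkers L" and \<xi>: "\<xi> \<in> Xfib L m"
  shows "mult_op L (sandwich_coeff L d N m \<xi> a (shift L \<nu> \<circ> b')) \<in> checkers L"
proof -
  define \<eta> where "\<eta> = shift L \<nu> \<circ> b'"
  have \<eta>b: "\<eta> \<in> bounded_ops L"
    unfolding \<eta>_def by (rule wshift_ops_bounded[OF shift_comp_diag_op(2)[OF fl \<nu>(2) subsetD[OF checkers_diag_ops b']]])
  have ab: "a \<in> bounded_ops L" by (rule checkers_bounded[OF a])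
  have "mult_op L (sandwich_coeff L d N m \<xi> a \<eta>) \<in> checkers L"
  proof (rule Xfib_induct[OF fl \<xi>, where P = "\<lambda>\<xi>. mult_op L (sandwich_coeff L d N m \<xi> a \<eta>) \<in> checkers L"])
    fix \<mu> b assume "\<mu> \<in> L" "tlen \<mu> = m" "b \<in> checkers L"
    thus "mult_op L (sandwich_coeff L d N m (shift L \<mu> \<circ> b) a \<eta>) \<in> checkers L"
      unfolding \<eta>_def by (rule sandwich_gens_checkers[OF fl a _ _ _ \<nu> b'])
  next
    have "mult_op L (sandwich_coeff L d N m 0 a \<eta>) = 0"
      by (rule mult_op_eq_0I) (rule sandwich_coeff_zero_left)
    thus "mult_op L (sandwich_coeff L d N m 0 a \<eta>) \<in> checkers L" using checkers_zero by simp
  next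
    fix x y
    assume "mult_op L (sandwich_coeff L d N m x a \<eta>) \<in> checkers L"
      and "mult_op L (sandwich_coeff L d N m y a \<eta>) \<in> checkers L"
    moreover have "mult_op L (sandwich_coeff L d N m (x + y) a \<eta>) =
        mult_op L (sandwich_coeff L d N m x a \<eta>) + mult_op L (sandwich_coeff L d N m y a \<eta>)"
      unfolding mult_op_add by (rule mult_op_cong) (simp add: sandwich_coeff_add_left)
    ultimately show "mult_op L (sandwich_coeff L d N m (x + y) a \<eta>) \<in> checkers L"
      using checkers_add by simp
  next
    fix c x assume "mult_op L (sandwich_coeff L d N m x a \<eta>) \<in> checkers L"
    moreover have "mult_op L (sandwich_coeff L d N m (opscale c x) a \<eta>) =
        opscale (cnj c) (mult_op L (sandwich_coeff L d N m x a \<eta>))"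
      unfolding opscale_mult_op by (rule mult_op_cong) (simp add: sandwich_coeff_scale_left)
    ultimately show "mult_op L (sandwich_coeff L d N m (opscale c x) a \<eta>) \<in> checkers L"
      using checkers_opscale by simp
  next
    fix s T
    assume s: "\<And>n. s n \<in> wshift_ops L m" "\<And>n. mult_op L (sandwich_coeff L d N m (s n) a \<eta>) \<in> checkers L"
      and T: "T \<in> wshift_ops L m" and lim: "(\<lambda>n. opnorm L (s n - T)) \<longlonglongrightarrow> 0"
    show "mult_op L (sandwich_coeff L d N m T a \<eta>) \<in> checkers L"
      by (rule sandwich_limit_left[OF s(2) wshift_ops_bounded[OF s(1)] wshift_ops_bounded[OF T] ab \<eta>b lim])
  qed
  thus ?thesis by (simp add: \<eta>_def)
qed

lemma mult_op_sandwich_coeff_checkers: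
  assumes fl: "factorial_language d N L" and a: "a \<in> checkers L"
    and \<xi>: "\<xi> \<in> Xfib L m" and \<eta>: "\<eta> \<in> Xfib L m"
  shows "mult_op L (sandwich_coeff L d N m \<xi> a \<eta>) \<in> checkers L"
proof (rule Xfib_induct[OF fl \<eta>, where P = "\<lambda>\<eta>. mult_op L (sandwich_coeff L d N m \<xi> a \<eta>) \<in> checkers L"])
  fix \<nu> b' assume "\<nu> \<in> L" "tlen \<nu> = m" "b' \<in> checkers L"
  thus "mult_op L (sandwich_coeff L d N m \<xi> a (shift L \<nu> \<circ> b')) \<in> checkers L"
    by (rule sandwich_gen_right_checkers[OF fl a _ _ _ \<xi>])
next
  have "mult_op L (sandwich_coeff L d N m \<xi> a 0) = 0"
    by (rule mult_op_eq_0I) (rule sandwich_coeff_zero_right)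
  thus "mult_op L (sandwich_coeff L d N m \<xi> a 0) \<in> checkers L" using checkers_zero by simp
next
  fix x y
  assume "mult_op L (sandwich_coeff L d N m \<xi> a x) \<in> checkers L"
    and "mult_op L (sandwich_coeff L d N m \<xi> a y) \<in> checkers L"
  moreover have "mult_op L (sandwich_coeff L d N m \<xi> a (x + y)) =
      mult_op L (sandwich_coeff L d N m \<xi> a x) + mult_op L (sandwich_coeff L d N m \<xi> a y)"
    unfolding mult_op_add by (rule mult_op_cong) (simp add: sandwich_coeff_add_right)
  ultimately show "mult_op L (sandwich_coeff L d N m \<xi> a (x + y)) \<in> checkers L"
    using checkers_add by simp
next
  fix c x assume "mult_op L (sandwich_coeff L d N m \<xi> a x) \<in> checkers L"
  moreover have "mult_op L (sandwich_coeff L d N m \<xi> a (opscale c x)) =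
      opscale c (mult_op L (sandwich_coeff L d N m \<xi> a x))"
    unfolding opscale_mult_op by (rule mult_op_cong) (simp add: sandwich_coeff_scale_right)
  ultimately show "mult_op L (sandwich_coeff L d N m \<xi> a (opscale c x)) \<in> checkers L"
    using checkers_opscale by simp
next
  fix s T
  assume s: "\<And>n. s n \<in> wshift_ops L m" "\<And>n. mult_op L (sandwich_coeff L d N m \<xi> a (s n)) \<in> checkers L"
    and T: "T \<in> wshift_ops L m" and lim: "(\<lambda>n. opnorm L (s n - T)) \<longlonglongrightarrow> 0"
  have "\<xi> \<in> bounded_ops L" using Xfib_wshift_ops[OF fl] \<xi> wshift_ops_bounded by blast
  thus "mult_op L (sandwich_coeff L d N m \<xi> a T) \<in> checkers L"
    using sandwich_limit_right[OF s(2) wshift_ops_bounded[OF s(1)] wshift_ops_bounded[OF T]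
        checkers_bounded[OF a] _ lim] by blast
qed

lemma sandwich_checkers:
  assumes fl: "factorial_language d N L" and a: "a \<in> checkers L"
    and \<xi>: "\<xi> \<in> Xfib L m" and \<eta>: "\<eta> \<in> Xfib L m"
  shows "adjoint L \<xi> \<circ> a \<circ> \<eta> \<in> checkers L"
  using mult_op_sandwich_coeff_checkers[OF assms]
    sandwich_eq_mult_op[OF fl subsetD[OF Xfib_wshift_ops[OF fl] \<xi>] subsetD[OF Xfib_wshift_ops[OF fl] \<eta>]
      subsetD[OF checkers_diag_ops a]]
  by simp

section \<open>The kernels of the left actions and the ideal \<open>\<I>\<^sub>F\<close>\<close>

lemma ker_phi_diag_coeff:
  assumes fl: "factorial_language d N L" and a: "a \<in> ker_phi L i"
    and v: "v \<in> L" "v i \<noteq> []"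
  shows "diag_coeff a v = 0"
proof -
  define k where "k = hd (v i)"
  obtain w where vw: "v = tcat (delta i k) w" using tcat_delta_iff[of v i k] v(2) k_def by blast
  have wL: "w \<in> L" and dL: "delta i k \<in> L"
    using factorial_language_tcatD[OF fl, of "delta i k" w] v(1) vw by simp_all
  have "a \<circ> (shift L (delta i k) \<circ> idop L) = 0"
    using a shift_delta_Xfib[OF dL] by (auto simp: ker_phi_def)
  hence "(a \<circ> (shift L (delta i k) \<circ> idop L)) (basis w) v = 0" by (simp only: zero_fun_apply)
  hence "a (shift L (delta i k) (basis w)) v = 0" using basis_ell2[OF wL] by (simp add: idop_def)
  thus ?thesis using shift_basis[OF wL] v vw by (simp add: diag_coeff_def)
qed

lemma wshift_ops_apply_eq_0:
  assumes "\<xi> \<in> wshift_ops L m" "\<not> wshift_dom L m v"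
  shows "\<xi> f v = 0"
proof -
  have "\<xi> f = wshift L m (wshift_coeff L m \<xi>) f" using wshift_ops_eq[OF assms(1)] by simp
  thus ?thesis using assms(2) by (simp add: wshift_def)
qed

lemma diag_ops_apply: "a \<in> diag_ops L \<Longrightarrow> f \<in> ell2 L \<Longrightarrow> a f v = diag_coeff a v * f v"
  using fun_cong[OF diag_ops_eq, of a L f] by (simp add: mult_op_def)

lemma ker_phiI:
  assumes fl: "factorial_language d N L" and a: "a \<in> checkers L"
    and z: "\<forall>v\<in>L. v i \<noteq> [] \<longrightarrow> diag_coeff a v = 0"
  shows "a \<in> ker_phi L i"
  unfolding ker_phi_def
proof (intro CollectI conjI ballI a)
  fix \<xi> assume "\<xi> \<in> Xfib L (unitvec i)"
  hence \<xi>: "\<xi> \<in> wshift_ops L (unitvec i)" using Xfib_wshift_ops[OF fl] by blast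
  have aD: "a \<in> diag_ops L" using a checkers_diag_ops by blast
  have "a (\<xi> f) v = 0" for f v
  proof (cases "f \<in> ell2 L")
    case False
    thus ?thesis by (simp add: bounded_op_outside[OF wshift_ops_bounded[OF \<xi>]] bounded_op_zero[OF checkers_bounded[OF a]])
  next
    case f: True
    have "diag_coeff a v = 0 \<or> \<xi> f v = 0"
    proof (cases "wshift_dom L (unitvec i) v")
      case True
      hence "v \<in> L" "v i \<noteq> []" by (auto simp: wshift_dom_def unitvec_def dest: spec[of _ i])
      thus ?thesis using z by blast
    qed (simp add: wshift_ops_apply_eq_0[OF \<xi>])
    thus ?thesis using diag_ops_apply[OF aD bounded_op_ell2[OF wshift_ops_bounded[OF \<xi>] f]] by auto
  qed
  thus "a \<circ> \<xi> = 0" by (simp add: fun_eq_iff)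
qed

lemma ker_phi_iff:
  assumes fl: "factorial_language d N L"
  shows "a \<in> ker_phi L i \<longleftrightarrow> a \<in> checkers L \<and> (\<forall>v\<in>L. v i \<noteq> [] \<longrightarrow> diag_coeff a v = 0)"
proof
  assume "a \<in> ker_phi L i"
  thus "a \<in> checkers L \<and> (\<forall>v\<in>L. v i \<noteq> [] \<longrightarrow> diag_coeff a v = 0)"
    using ker_phi_diag_coeff[OF fl] by (auto simp: ker_phi_def)
qed (use ker_phiI[OF fl] in blast)

lemma Inter_ker_phi_eq:
  assumes fl: "factorial_language d N L" and F: "F \<noteq> {}" "finite F"
  shows "(\<Inter>i\<in>F. ker_phi L i) = {a \<in> checkers L. a = a \<circ> QF d L F}"
proof -
  have K: "a \<in> (\<Inter>i\<in>F. ker_phi L i) \<longleftrightarrow>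
      a \<in> checkers L \<and> (\<forall>v\<in>L. (\<exists>i\<in>F. v i \<noteq> []) \<longrightarrow> diag_coeff a v = 0)" for a
    using ker_phi_iff[OF fl, of a] F(1) by blast
  have Q: "a = a \<circ> QF d L F \<longleftrightarrow> (\<forall>v\<in>L. (\<exists>i\<in>F. v i \<noteq> []) \<longrightarrow> diag_coeff a v = 0)"
    if "a \<in> checkers L" for a
    unfolding QF_eq_mult_op[OF fl F(2)] using that checkers_diag_ops by (intro fixed_by_empty_ind_iff) blast
  show ?thesis
  proof (rule set_eqI)
    fix a show "a \<in> (\<Inter>i\<in>F. ker_phi L i) \<longleftrightarrow> a \<in> {a \<in> checkers L. a = a \<circ> QF d L F}"
      using K[of a] Q[of a] by (simp only: mem_Collect_eq) blast
  qed
qed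

lemma comp_diag_ops_eq_0I:
  "a \<in> diag_ops L \<Longrightarrow> b \<in> diag_ops L \<Longrightarrow> (\<And>v. v \<in> L \<Longrightarrow> diag_coeff a v = 0 \<or> diag_coeff b v = 0) \<Longrightarrow>
    a \<circ> b = 0"
  unfolding diag_ops_comp_eq_mult_op by (intro mult_op_eq_0I) auto

lemma JF_if_killed_by_QF:
  assumes fl: "factorial_language d N L" and F: "F \<noteq> {}" "finite F"
    and a: "a \<in> checkers L" and Q: "a \<circ> QF d L F = 0"
  shows "a \<in> JF L F"
proof -
  have aD: "a \<in> diag_ops L" using a checkers_diag_ops by blast
  have az: "\<forall>v\<in>L. (\<forall>i\<in>F. v i = []) \<longrightarrow> diag_coeff a v = 0"
    using Q killed_by_empty_ind_iff[OF aD] QF_eq_mult_op[OF fl F(2)] by simp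
  have "a \<circ> b = 0" if b: "b \<in> (\<Inter>i\<in>F. ker_phi L i)" for b
  proof (rule comp_diag_ops_eq_0I[OF aD])
    obtain i where "i \<in> F" using F(1) by blast
    hence "b \<in> checkers L" using b by (simp add: ker_phi_def)
    thus "b \<in> diag_ops L" using checkers_diag_ops by blast
    have bz: "\<forall>i\<in>F. \<forall>v\<in>L. v i \<noteq> [] \<longrightarrow> diag_coeff b v = 0" using b ker_phi_iff[OF fl] by simp
    show "diag_coeff a v = 0 \<or> diag_coeff b v = 0" if "v \<in> L" for v
      using that az bz by blast
  qed
  thus ?thesis using a by (simp add: JF_def annihilator_def)
qed

lemma sandwich_killed_by_QF:
  assumes fl: "factorial_language d N L" and F: "finite F"
    and a: "a \<in> checkers L" and Q: "a \<circ> QF d L F = 0" and m: "\<forall>i\<in>F. m i = 0"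
    and \<xi>: "\<xi> \<in> Xfib L m" and \<eta>: "\<eta> \<in> Xfib L m"
  shows "adjoint L \<xi> \<circ> a \<circ> \<eta> \<circ> QF d L F = 0"
proof -
  have aD: "a \<in> diag_ops L" using a checkers_diag_ops by blast
  have az: "\<forall>v\<in>L. (\<forall>i\<in>F. v i = []) \<longrightarrow> diag_coeff a v = 0"
    using Q killed_by_empty_ind_iff[OF aD] QF_eq_mult_op[OF fl F] by simp
  have \<xi>W: "\<xi> \<in> wshift_ops L m" and \<eta>W: "\<eta> \<in> wshift_ops L m" using Xfib_wshift_ops[OF fl] \<xi> \<eta> by auto
  have e: "adjoint L \<xi> \<circ> a \<circ> \<eta> = mult_op L (sandwich_coeff L d N m \<xi> a \<eta>)"
    by (rule sandwich_eq_mult_op[OF fl \<xi>W \<eta>W aD])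
  have "sandwich_coeff L d N m \<xi> a \<eta> w = 0" if w: "\<forall>i\<in>F. w i = []" for w
    unfolding sandwich_coeff_def
  proof (rule sum.neutral, rule ballI)
    fix \<kappa> assume "\<kappa> \<in> words_of_len d N m"
    hence "length (\<kappa> i) = m i" for i by (simp add: words_of_len_def tlen_def fun_eq_iff)
    hence "\<forall>i\<in>F. \<kappa> i = []" using m by (metis length_0_conv)
    hence "\<forall>i\<in>F. tcat \<kappa> w i = []" using w by (simp add: tcat_def)
    thus "(if tcat \<kappa> w \<in> L then cnj (wshift_coeff L m \<xi> (tcat \<kappa> w)) * diag_coeff a (tcat \<kappa> w) *
        wshift_coeff L m \<eta> (tcat \<kappa> w) else 0) = 0" using az by simp
  qed
  thus ?thesis
    unfolding QF_eq_mult_op[OF fl F] e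
    by (simp add: killed_by_empty_ind_iff[OF mult_op_diag_ops[OF bounded_on_sandwich_coeff]]
        diag_coeff_mult_op wshift_ops_bounded[OF \<xi>W] checkers_bounded[OF a] wshift_ops_bounded[OF \<eta>W])
qed

lemma killed_by_QF_subset_IF:
  assumes fl: "factorial_language d N L" and F: "F \<noteq> {}" "finite F"
  shows "{a \<in> checkers L. a \<circ> QF d L F = 0} \<subseteq> IF N L F"
proof (clarify)
  fix a assume a: "a \<in> checkers L" and Q: "a \<circ> QF d L F = 0"
  show "a \<in> IF N L F"
    unfolding IF_def
  proof (intro CollectI conjI allI impI ballI)
    show "a \<in> JF L F" by (rule JF_if_killed_by_QF[OF fl F a Q])
    fix m \<xi> \<eta> assume m: "(\<forall>j. j \<notin> {1..N} \<longrightarrow> m j = 0) \<and> (\<forall>i\<in>F. m i = 0)"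
      and \<xi>: "\<xi> \<in> Xfib L m" and \<eta>: "\<eta> \<in> Xfib L m"
    show "adjoint L \<xi> \<circ> a \<circ> \<eta> \<in> JF L F"
      using m by (intro JF_if_killed_by_QF[OF fl F sandwich_checkers[OF fl a \<xi> \<eta>]]
          sandwich_killed_by_QF[OF fl F(2) a Q _ \<xi> \<eta>]) simp
  qed
qed

lemma QF_idem:
  "factorial_language d N L \<Longrightarrow> finite F \<Longrightarrow> QF d L F \<circ> QF d L F = QF d L F"
  by (simp add: QF_eq_mult_op mult_op_comp[OF bounded_on_empty_ind]) (rule mult_op_cong, simp add: empty_ind_def)

lemma JF_killed_by_QF:
  assumes fl: "factorial_language d N L" and F: "F \<noteq> {}" "finite F"
    and Q: "QF d L F \<in> checkers L" and x: "x \<in> JF L F"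
  shows "x \<circ> QF d L F = 0"
proof -
  have "QF d L F \<in> (\<Inter>i\<in>F. ker_phi L i)"
    unfolding Inter_ker_phi_eq[OF fl F] using Q QF_idem[OF fl F(2)] by (simp add: comp_assoc)
  thus ?thesis using x by (simp add: JF_def annihilator_def)
qed

lemma diag_ops_comp_idop_diff:
  assumes a: "a \<in> diag_ops L" and c: "bounded_on L c"
  shows "a \<circ> (idop L - mult_op L c) = a - (a \<circ> mult_op L c)"
proof -
  have c': "bounded_on L (\<lambda>v. 1 - c v)"
    using c by (auto simp: bounded_on_def intro: order_trans[OF norm_triangle_ineq4] add_left_mono)
  have "a \<circ> (idop L - mult_op L c) = mult_op L (\<lambda>v. diag_coeff a v * (1 - c v))"
    unfolding diag_ops_comp_left[OF a] idop_eq_mult_op mult_op_diff by (rule mult_op_comp[OF c'])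
  also have "\<dots> = mult_op L (diag_coeff a) - mult_op L (\<lambda>v. diag_coeff a v * c v)"
    unfolding mult_op_diff by (simp add: algebra_simps)
  also have "\<dots> = a - (a \<circ> mult_op L c)"
  proof -
    have ac: "a \<circ> mult_op L c = mult_op L (\<lambda>v. diag_coeff a v * c v)"
      unfolding diag_ops_comp_left[OF a] by (rule mult_op_comp[OF c])
    show ?thesis unfolding ac by (simp only: diag_ops_eq[OF a, symmetric])
  qed
  finally show ?thesis .
qed

lemma idop_comp:
  assumes "T \<in> bounded_ops L"
  shows "idop L \<circ> T = T"
proof
  fix f show "(idop L \<circ> T) f = T f"
    by (cases "f \<in> ell2 L") (simp_all add: idop_def bounded_op_ell2[OF assms] bounded_op_outside[OF assms])
qed

lemma QF_in_checkers_iff: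
  assumes fl: "factorial_language d N L" and F: "F \<noteq> {}" "finite F"
  shows "QF d L F \<in> checkers L \<longleftrightarrow> IF N L F = {a \<circ> (idop L - QF d L F) | a. a \<in> checkers L}"
proof
  assume Q: "QF d L F \<in> checkers L"
  have compl: "a \<circ> (idop L - QF d L F) = a - (a \<circ> QF d L F)" if "a \<in> checkers L" for a
    unfolding QF_eq_mult_op[OF fl F(2)]
    using diag_ops_comp_idop_diff[OF _ bounded_on_empty_ind] that checkers_diag_ops by blast
  show "IF N L F = {a \<circ> (idop L - QF d L F) | a. a \<in> checkers L}"
  proof (intro equalityI subsetI)
    fix x assume "x \<in> IF N L F"
    hence "x \<in> checkers L" "x \<circ> QF d L F = 0"
      using JF_killed_by_QF[OF fl F Q] by (auto simp: IF_def JF_def annihilator_def)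
    moreover from this have "x \<circ> (idop L - QF d L F) = x" using compl[of x] by simp
    ultimately show "x \<in> {a \<circ> (idop L - QF d L F) | a. a \<in> checkers L}"
      by (intro CollectI exI[of _ x]) simp
  next
    fix y assume "y \<in> {a \<circ> (idop L - QF d L F) | a. a \<in> checkers L}"
    then obtain a where a: "a \<in> checkers L" and y: "y = a - (a \<circ> QF d L F)" using compl by blast
    have "y \<circ> QF d L F = (a \<circ> QF d L F) - (a \<circ> (QF d L F \<circ> QF d L F))"
      unfolding y by (simp add: fun_eq_iff)
    hence "y \<circ> QF d L F = 0" by (simp add: QF_idem[OF fl F(2)])
    moreover have "y \<in> checkers L" unfolding y by (intro checkers_diff checkers_comp a Q)
    ultimately show "y \<in> IF N L F" using killed_by_QF_subset_IF[OF fl F] by blast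
  qed
next
  assume I: "IF N L F = {a \<circ> (idop L - QF d L F) | a. a \<in> checkers L}"
  have "idop L \<circ> (idop L - QF d L F) \<in> IF N L F"
    unfolding I using checkers_idop by blast
  hence "idop L \<circ> (idop L - QF d L F) \<in> checkers L" by (simp add: IF_def JF_def annihilator_def)
  moreover have "idop L - QF d L F \<in> bounded_ops L"
    unfolding QF_eq_mult_op[OF fl F(2)]
    by (intro bounded_ops_diff bounded_ops_idop mult_op_bounded bounded_on_empty_ind)
  ultimately have "idop L - QF d L F \<in> checkers L" by (simp add: idop_comp)
  hence "idop L - (idop L - QF d L F) \<in> checkers L" by (rule checkers_diff[OF checkers_idop])
  thus "QF d L F \<in> checkers L" by simp
qed

theorem proposition9p16:
  fixes d N :: nat and L :: "word set" and F :: "nat set"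
  assumes "factorial_language d N L"
    and "F \<noteq> {}" and "F \<subseteq> {1..N}"
  shows "(\<Inter>i\<in>F. ker_phi L i) = {a \<in> checkers L. a = a \<circ> QF d L F}
    \<and> {a \<in> checkers L. a \<circ> QF d L F = 0} \<subseteq> IF N L F
    \<and> (QF d L F \<in> checkers L \<longleftrightarrow> IF N L F = {a \<circ> (idop L - QF d L F) | a. a \<in> checkers L})"
proof -
  have F: "finite F" using assms(3) finite_subset by blast
  show ?thesis
    using Inter_ker_phi_eq[OF assms(1,2) F] killed_by_QF_subset_IF[OF assms(1,2) F]
      QF_in_checkers_iff[OF assms(1,2) F]
    by blast
qed

end
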